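(* Let $p>q$, $\theta\in(0,\frac{\pi}{2})$, and let $f$ be a positive smooth function on $\mathcal{C}^n_\theta$. If $h_1,h_2$ are two positive, smooth, strictly convex solutions of $$\det(\nabla^2h+hI)=f\,h^{p-1}(h^2+|\nabla h|^2)^{\frac{n+1-q}{2}}\ \text{ in }\mathcal{C}^n_\theta,\qquad \nabla_\mu h=\cot\theta\,h\ \text{ on }\partial\mathcal{C}^n_\theta,$$ then $h_1\equiv h_2$.
   Context: $\mathbb{R}^{n+1}_+=\{y:\langle y,E_{n+1}\rangle>0\}$, $e:=-E_{n+1}$, $\mathcal{C}^n_\theta=\{\zeta\in\overline{\mathbb{R}^{n+1}_+}:|\zeta-\cos\theta\,e|=1\}$ with its induced metric; $\nabla,\nabla^2$ are the gradient and covariant Hessian, $I$ the identity, $\mu$ the unit outward co-normal of $\partial\mathcal{C}^n_\theta$. Strictly convex means $\nabla^2h+hI>0$. *)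

theory Defs
  imports "HOL-Analysis.Analysis"
begin

definition partial_deriv :: "'m::finite \<Rightarrow> (real^'m \<Rightarrow> real) \<Rightarrow> real^'m \<Rightarrow> real" where
  "partial_deriv i f x = deriv (\<lambda>t. f (x + t *\<^sub>R axis i 1)) 0"

fun iter_partial :: "'m::finite list \<Rightarrow> (real^'m \<Rightarrow> real) \<Rightarrow> real^'m \<Rightarrow> real" where
  "iter_partial [] f = f"
| "iter_partial (i # is) f = partial_deriv i (iter_partial is f)"

definition cinf_on :: "(real^'m::finite) set \<Rightarrow> (real^'m \<Rightarrow> real) \<Rightarrow> bool" where
  "cinf_on U f \<longleftrightarrow> open U \<and>
     (\<forall>is. continuous_on U (iter_partial is f) \<and>
        (\<forall>i. \<forall>x\<in>U. (\<lambda>t. iter_partial is f (x + t *\<^sub>R axis i 1)) field_differentiable (at 0)))"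

definition smooth_upto :: "(real^'m::finite) set \<Rightarrow> (real^'m \<Rightarrow> real) \<Rightarrow> bool" where
  "smooth_upto S f \<longleftrightarrow> (\<exists>U. S \<subseteq> U \<and> cinf_on U f)"

definition egrad :: "(real^'m::finite \<Rightarrow> real) \<Rightarrow> real^'m \<Rightarrow> real^'m" where
  "egrad f x = (\<chi> i. partial_deriv i f x)"

definition ehess :: "(real^'m::finite \<Rightarrow> real) \<Rightarrow> real^'m \<Rightarrow> real^'m^'m" where
  "ehess f x = (\<chi> i j. partial_deriv i (partial_deriv j f) x)"

definition outer :: "real^'m::finite \<Rightarrow> real^'m \<Rightarrow> real^'m^'m" where
  "outer v w = (\<chi> i j. v $ i * w $ j)"

definition tproj :: "real^'m::finite \<Rightarrow> real^'m^'m" where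
  "tproj nu = mat 1 - outer nu nu"

text \<open>Coordinate k plays the role of E_{n+1}; e = - E_{n+1}.\<close>
definition cap_e :: "'m::finite \<Rightarrow> real^'m" where
  "cap_e k = - axis k 1"

definition cap_center :: "real \<Rightarrow> 'm::finite \<Rightarrow> real^'m" where
  "cap_center \<theta> k = cos \<theta> *\<^sub>R cap_e k"

definition cap :: "real \<Rightarrow> 'm::finite \<Rightarrow> (real^'m) set" where
  "cap \<theta> k = {\<zeta>. \<zeta> $ k \<ge> 0 \<and> norm (\<zeta> - cap_center \<theta> k) = 1}"

definition cap_interior :: "real \<Rightarrow> 'm::finite \<Rightarrow> (real^'m) set" where
  "cap_interior \<theta> k = {\<zeta> \<in> cap \<theta> k. \<zeta> $ k > 0}"

definition cap_bdry :: "real \<Rightarrow> 'm::finite \<Rightarrow> (real^'m) set" where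
  "cap_bdry \<theta> k = {\<zeta> \<in> cap \<theta> k. \<zeta> $ k = 0}"

definition cap_normal :: "real \<Rightarrow> 'm::finite \<Rightarrow> real^'m \<Rightarrow> real^'m" where
  "cap_normal \<theta> k \<zeta> = \<zeta> - cap_center \<theta> k"

definition cov_grad :: "real \<Rightarrow> 'm::finite \<Rightarrow> (real^'m \<Rightarrow> real) \<Rightarrow> real^'m \<Rightarrow> real^'m" where
  "cov_grad \<theta> k G \<zeta> = tproj (cap_normal \<theta> k \<zeta>) *v egrad G \<zeta>"

text \<open>Covariant Hessian on the cap of the restriction of G (Gauss formula for the unit sphere),
  as a symmetric matrix acting on the tangent space and vanishing on the normal direction.\<close>
definition cov_hess :: "real \<Rightarrow> 'm::finite \<Rightarrow> (real^'m \<Rightarrow> real) \<Rightarrow> real^'m \<Rightarrow> real^'m^'m" where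
  "cov_hess \<theta> k G \<zeta> =
     (let nu = cap_normal \<theta> k \<zeta>; P = tproj nu
      in P ** (ehess G \<zeta> - (egrad G \<zeta> \<bullet> nu) *\<^sub>R mat 1) ** P)"

definition cov_W :: "real \<Rightarrow> 'm::finite \<Rightarrow> (real^'m \<Rightarrow> real) \<Rightarrow> real^'m \<Rightarrow> real^'m^'m" where
  "cov_W \<theta> k G \<zeta> = cov_hess \<theta> k G \<zeta> + G \<zeta> *\<^sub>R tproj (cap_normal \<theta> k \<zeta>)"

text \<open>Determinant of nabla^2 h + h I as an endomorphism of the tangent space.\<close>
definition cov_det :: "real \<Rightarrow> 'm::finite \<Rightarrow> (real^'m \<Rightarrow> real) \<Rightarrow> real^'m \<Rightarrow> real" where
  "cov_det \<theta> k G \<zeta> =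
     det (cov_W \<theta> k G \<zeta> + outer (cap_normal \<theta> k \<zeta>) (cap_normal \<theta> k \<zeta>))"

definition strictly_convex_cap :: "real \<Rightarrow> 'm::finite \<Rightarrow> (real^'m \<Rightarrow> real) \<Rightarrow> bool" where
  "strictly_convex_cap \<theta> k G \<longleftrightarrow>
     (\<forall>\<zeta>\<in>cap \<theta> k. \<forall>v. v \<bullet> cap_normal \<theta> k \<zeta> = 0 \<and> v \<noteq> 0 \<longrightarrow>
         v \<bullet> (cov_W \<theta> k G \<zeta> *v v) > 0)"

text \<open>Unit outward co-normal of the boundary of the cap (tangent to the sphere, normal to the
  boundary, pointing out of the cap, i.e. towards decreasing coordinate k).\<close>
definition cap_conormal :: "real \<Rightarrow> 'm::finite \<Rightarrow> real^'m \<Rightarrow> real^'m" where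
  "cap_conormal \<theta> k \<zeta> =
     (let w = tproj (cap_normal \<theta> k \<zeta>) *v axis k 1 in - (1 / norm w) *\<^sub>R w)"

definition is_cap_solution ::
    "real \<Rightarrow> 'm::finite \<Rightarrow> real \<Rightarrow> real \<Rightarrow> (real^'m \<Rightarrow> real) \<Rightarrow> (real^'m \<Rightarrow> real) \<Rightarrow> bool" where
  "is_cap_solution \<theta> k p q f h \<longleftrightarrow>
     smooth_upto (cap \<theta> k) h \<and>
     (\<forall>\<zeta>\<in>cap \<theta> k. h \<zeta> > 0) \<and>
     strictly_convex_cap \<theta> k h \<and>
     (\<forall>\<zeta>\<in>cap_interior \<theta> k.
        cov_det \<theta> k h \<zeta> =
          f \<zeta> * h \<zeta> powr (p - 1) *
          ((h \<zeta>)\<^sup>2 + (norm (cov_grad \<theta> k h \<zeta>))\<^sup>2) powr ((real CARD('m) - q) / 2)) \<and>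
     (\<forall>\<zeta>\<in>cap_bdry \<theta> k.
        cov_grad \<theta> k h \<zeta> \<bullet> cap_conormal \<theta> k \<zeta> = cot \<theta> * h \<zeta>)"

end

theory Submission
  imports Defs
begin

text \<open>Let \<open>c\<close> be the maximum of \<open>h1 / h2\<close> on the compact cap, attained at \<open>\<zeta>0\<close>, so that
  \<open>h1 - c h2 \<le> 0\<close> with equality at \<open>\<zeta>0\<close>. The first- and second-order conditions for this maximum
  along great circles through \<open>\<zeta>0\<close> that enter the cap give \<open>\<nabla>h1 = c \<nabla>h2\<close> and
  \<open>\<nabla>\<^sup>2h1 + h1 I \<le> c (\<nabla>\<^sup>2h2 + h2 I)\<close> on the tangent space; at a boundary point the
  Robin condition supplies the inward direction that the cap does not. Since \<open>\<nabla>\<^sup>2h1 + h1 I\<close> is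
  positive definite, the determinant is monotone there, so \<open>det(\<nabla>\<^sup>2h1 + h1 I) \<le> c\<^sup>n det(\<nabla>\<^sup>2h2 + h2 I)\<close>
  at \<open>\<zeta>0\<close>. By homogeneity of the right-hand side of the equation the left-hand side equals
  \<open>c\<^bsup>p+n-q\<^esup>\<close> times the right-hand one, hence \<open>c\<^bsup>p-q\<^esup> \<le> 1\<close>, i.e. \<open>c \<le> 1\<close>. Exchanging
  \<open>h1\<close> and \<open>h2\<close> gives \<open>h1 = h2\<close>.\<close>

section \<open>Smooth functions\<close>

definition C1_on :: "(real^'m::finite) set \<Rightarrow> (real^'m \<Rightarrow> real) \<Rightarrow> bool" where
  "C1_on U G \<longleftrightarrow> open U \<and> continuous_on U G \<and> (\<forall>i. continuous_on U (partial_deriv i G)) \<and>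
     (\<forall>i. \<forall>x\<in>U. (\<lambda>t. G (x + t *\<^sub>R axis i 1)) field_differentiable (at 0))"

lemma iter_partial_append: "iter_partial (xs @ ys) f = iter_partial xs (iter_partial ys f)"
  by (induction xs) auto

lemma cinf_on_imp_C1_on: "cinf_on U G \<Longrightarrow> C1_on U G"
  unfolding cinf_on_def C1_on_def
proof (intro conjI allI ballI; (elim conjE)?)
  fix i x assume "\<forall>is. continuous_on U (iter_partial is G) \<and>
        (\<forall>i. \<forall>x\<in>U. (\<lambda>t. iter_partial is G (x + t *\<^sub>R axis i 1)) field_differentiable at 0)"
  note A = spec[OF this]
  show "continuous_on U G" using A[of "[]"] by simp
  show "continuous_on U (partial_deriv i G)" using A[of "[i]"] by simp
  show "x \<in> U \<Longrightarrow> (\<lambda>t. G (x + t *\<^sub>R axis i 1)) field_differentiable at 0" using A[of "[]"] by simp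
qed

lemma cinf_on_partial_deriv: "cinf_on U G \<Longrightarrow> cinf_on U (partial_deriv j G)"
  unfolding cinf_on_def
proof (intro conjI allI ballI; (elim conjE)?)
  fix "is" i x assume "\<forall>is. continuous_on U (iter_partial is G) \<and>
        (\<forall>i. \<forall>x\<in>U. (\<lambda>t. iter_partial is G (x + t *\<^sub>R axis i 1)) field_differentiable at 0)"
  note A = spec[OF this, of "is @ [j]", unfolded iter_partial_append, simplified]
  show "continuous_on U (iter_partial is (partial_deriv j G))" using A by simp
  show "x \<in> U \<Longrightarrow> (\<lambda>t. iter_partial is (partial_deriv j G) (x + t *\<^sub>R axis i 1)) field_differentiable at 0"
    using A by simp
qed

lemma C1_on_partial_deriv: "cinf_on U G \<Longrightarrow> C1_on U (partial_deriv j G)"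
  by (simp add: cinf_on_imp_C1_on cinf_on_partial_deriv)

lemma cinf_on_continuous_on: "cinf_on U G \<Longrightarrow> continuous_on U G"
  using cinf_on_imp_C1_on C1_on_def by blast

lemma C1_on_has_real_derivative_line:
  assumes "C1_on U G" "x + s *\<^sub>R axis i 1 \<in> U"
  shows "((\<lambda>t. G (x + t *\<^sub>R axis i 1)) has_real_derivative partial_deriv i G (x + s *\<^sub>R axis i 1)) (at s)"
proof -
  define y where "y = x + s *\<^sub>R axis i 1"
  have "(\<lambda>t. G (y + t *\<^sub>R axis i 1)) field_differentiable (at 0)"
    using assms unfolding C1_on_def y_def by blast
  then have "((\<lambda>t. G (y + t *\<^sub>R axis i 1)) has_real_derivative partial_deriv i G y) (at (s + (-s)))"
    unfolding partial_deriv_def by (simp add: DERIV_deriv_iff_field_differentiable)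
  then have "((\<lambda>t. G (y + (t + (-s)) *\<^sub>R axis i 1)) has_real_derivative partial_deriv i G y) (at s)"
    by (subst (asm) DERIV_shift) simp
  moreover have "(\<lambda>t. G (y + (t + (-s)) *\<^sub>R axis i 1)) = (\<lambda>t. G (x + t *\<^sub>R axis i 1))"
    by (simp add: y_def algebra_simps)
  ultimately show ?thesis by (simp add: y_def)
qed

lemma MVT_linear_deviation:
  fixes g g' :: "real \<Rightarrow> real"
  assumes D: "\<And>t. \<bar>t\<bar> \<le> \<bar>b\<bar> \<Longrightarrow> (g has_real_derivative g' t) (at t)"
    and B: "\<And>t. \<bar>t\<bar> \<le> \<bar>b\<bar> \<Longrightarrow> \<bar>g' t - L\<bar> \<le> B"
  shows "\<bar>g b - g 0 - b * L\<bar> \<le> B * \<bar>b\<bar>"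
proof (cases "b = 0")
  case False
  obtain z where z: "\<bar>z\<bar> \<le> \<bar>b\<bar>" "g b - g 0 = b * g' z"
  proof (cases "b > 0")
    case True
    then show ?thesis using MVT2[of 0 b g g'] D that by force
  next
    case False
    with \<open>b \<noteq> 0\<close> have "b < 0" by simp
    then obtain z where "b < z" "z < 0" "g 0 - g b = (0 - b) * g' z"
      using MVT2[of b 0 g g'] D by force
    then show ?thesis using that[of z] by (simp add: algebra_simps)
  qed
  then have "g b - g 0 - b * L = b * (g' z - L)" by (simp add: algebra_simps)
  then show ?thesis using B[OF z(1)] by (simp add: abs_mult) (metis abs_ge_zero mult.commute mult_left_mono)
qed simp

lemma C1_on_coordinate_increment:
  assumes C: "C1_on U G" and xU: "x \<in> U" and e: "e > 0"
  obtains d where "d > 0"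
    "\<And>y s. (\<And>t. \<bar>t\<bar> \<le> \<bar>s\<bar> \<Longrightarrow> dist (y + t *\<^sub>R axis a 1) x < d) \<Longrightarrow>
       \<bar>G (y + s *\<^sub>R axis a 1) - G y - s * partial_deriv a G x\<bar> \<le> e * \<bar>s\<bar>"
proof -
  have opU: "open U" using C unfolding C1_on_def by blast
  obtain r where r: "r > 0" "ball x r \<subseteq> U" using opU xU open_contains_ball by blast
  have "continuous (at x) (partial_deriv a G)"
    using C xU opU unfolding C1_on_def by (meson continuous_on_eq_continuous_at)
  then obtain d2 where d2: "d2 > 0"
      "\<And>y. dist y x < d2 \<Longrightarrow> dist (partial_deriv a G y) (partial_deriv a G x) < e"
    unfolding continuous_at_eps_delta using e by meson
  show ?thesis
  proof (rule that[of "min r d2"])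
    fix y s assume seg: "\<And>t. \<bar>t\<bar> \<le> \<bar>s\<bar> \<Longrightarrow> dist (y + t *\<^sub>R axis a 1) x < min r d2"
    have "\<bar>G (y + s *\<^sub>R axis a 1) - G (y + 0 *\<^sub>R axis a 1) - s * partial_deriv a G x\<bar> \<le> e * \<bar>s\<bar>"
    proof (rule MVT_linear_deviation)
      fix t assume t: "\<bar>t\<bar> \<le> \<bar>s\<bar>"
      have "y + t *\<^sub>R axis a 1 \<in> U" using seg[OF t] r by (auto simp: dist_commute)
      then show "((\<lambda>t. G (y + t *\<^sub>R axis a 1)) has_real_derivative partial_deriv a G (y + t *\<^sub>R axis a 1)) (at t)"
        by (rule C1_on_has_real_derivative_line[OF C])
      show "\<bar>partial_deriv a G (y + t *\<^sub>R axis a 1) - partial_deriv a G x\<bar> \<le> e"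
        using d2(2) seg[OF t] by (fastforce simp: dist_real_def)
    qed
    then show "\<bar>G (y + s *\<^sub>R axis a 1) - G y - s * partial_deriv a G x\<bar> \<le> e * \<bar>s\<bar>" by simp
  qed (use r d2 in simp)
qed

lemma norm_partial_axis_sum_le:
  fixes h :: "real^'m::finite"
  assumes "a \<notin> S" "\<bar>t\<bar> \<le> \<bar>h$a\<bar>"
  shows "norm ((\<Sum>i\<in>S. h$i *\<^sub>R axis i (1::real)) + t *\<^sub>R axis a 1) \<le> norm h"
proof (rule norm_le_componentwise_cart)
  fix j
  show "norm (((\<Sum>i\<in>S. h$i *\<^sub>R axis i (1::real)) + t *\<^sub>R axis a 1) $ j) \<le> norm (h $ j)"
    using assms
    by (cases "j \<in> S"; cases "j = a") (auto simp: axis_def if_distrib sum.delta' real_norm_def cong: if_cong)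
qed

lemma C1_on_partial_sum_approx:
  fixes G :: "real^'m::finite \<Rightarrow> real"
  assumes C: "C1_on U G" and xU: "x \<in> U" and "finite S"
  shows "\<forall>e>0. \<exists>d>0. \<forall>h. norm h < d \<longrightarrow>
      \<bar>G (x + (\<Sum>i\<in>S. h$i *\<^sub>R axis i 1)) - G x - (\<Sum>i\<in>S. partial_deriv i G x * h$i)\<bar> \<le> e * norm h"
  using \<open>finite S\<close>
proof (induction S rule: finite_induct)
  case empty
  then show ?case by (auto intro!: exI[of _ 1])
next
  case (insert a S)
  show ?case
  proof (intro allI impI)
    fix e :: real assume e: "e > 0"
    obtain d1 where d1: "d1 > 0" "\<And>h. norm h < d1 \<Longrightarrow>
        \<bar>G (x + (\<Sum>i\<in>S. h$i *\<^sub>R axis i 1)) - G x - (\<Sum>i\<in>S. partial_deriv i G x * h$i)\<bar> \<le> e/2 * norm h"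
      using insert.IH e by (meson half_gt_zero)
    obtain d2 where d2: "d2 > 0" "\<And>y s. (\<And>t. \<bar>t\<bar> \<le> \<bar>s\<bar> \<Longrightarrow> dist (y + t *\<^sub>R axis a 1) x < d2) \<Longrightarrow>
       \<bar>G (y + s *\<^sub>R axis a 1) - G y - s * partial_deriv a G x\<bar> \<le> e/2 * \<bar>s\<bar>"
      using C1_on_coordinate_increment[OF C xU, of "e/2"] e by auto
    show "\<exists>d>0. \<forall>h. norm h < d \<longrightarrow> \<bar>G (x + (\<Sum>i\<in>insert a S. h$i *\<^sub>R axis i 1)) - G x
        - (\<Sum>i\<in>insert a S. partial_deriv i G x * h$i)\<bar> \<le> e * norm h"
    proof (intro exI[of _ "min d1 d2"] conjI allI impI)
      fix h :: "real^'m" assume h: "norm h < min d1 d2"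
      define y0 where "y0 = x + (\<Sum>i\<in>S. h$i *\<^sub>R axis i 1)"
      have "dist (y0 + t *\<^sub>R axis a 1) x < d2" if "\<bar>t\<bar> \<le> \<bar>h$a\<bar>" for t
        using norm_partial_axis_sum_le[OF insert.hyps(2) that] h by (simp add: y0_def dist_norm add.assoc)
      then have step: "\<bar>G (y0 + h$a *\<^sub>R axis a 1) - G y0 - h$a * partial_deriv a G x\<bar> \<le> e/2 * \<bar>h$a\<bar>"
        by (rule d2(2))
      have IH: "\<bar>G y0 - G x - (\<Sum>i\<in>S. partial_deriv i G x * h$i)\<bar> \<le> e/2 * norm h"
        using d1(2)[of h] h by (simp add: y0_def)
      have ha: "e/2 * \<bar>h$a\<bar> \<le> e/2 * norm h"
        using e by (simp add: component_le_norm_cart[of h a, unfolded real_norm_def])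
      have sum_eq: "x + (\<Sum>i\<in>insert a S. h$i *\<^sub>R axis i 1) = y0 + h$a *\<^sub>R axis a 1"
        using insert.hyps by (simp add: y0_def algebra_simps)
      have lin_eq: "(\<Sum>i\<in>insert a S. partial_deriv i G x * h$i)
          = h$a * partial_deriv a G x + (\<Sum>i\<in>S. partial_deriv i G x * h$i)"
        using insert.hyps by simp
      show "\<bar>G (x + (\<Sum>i\<in>insert a S. h$i *\<^sub>R axis i 1)) - G x
          - (\<Sum>i\<in>insert a S. partial_deriv i G x * h$i)\<bar> \<le> e * norm h"
        using step IH ha unfolding sum_eq lin_eq abs_le_iff by linarith
    qed (use d1 d2 in simp)
  qed
qed

lemma C1_on_has_derivative:
  fixes G :: "real^'m::finite \<Rightarrow> real"
  assumes C: "C1_on U G" and xU: "x \<in> U"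
  shows "(G has_derivative (\<lambda>v. egrad G x \<bullet> v)) (at x)"
  unfolding has_derivative_at_alt
proof (intro conjI bounded_linear_inner_right allI impI)
  fix e :: real assume "e > 0"
  then obtain d where d: "d > 0" "\<And>h. norm h < d \<Longrightarrow>
      \<bar>G (x + (\<Sum>i\<in>UNIV. h$i *\<^sub>R axis i 1)) - G x - (\<Sum>i\<in>UNIV. partial_deriv i G x * h$i)\<bar> \<le> e * norm h"
    using C1_on_partial_sum_approx[OF C xU, of UNIV] by auto
  have "(\<Sum>i\<in>UNIV. h$i *\<^sub>R axis i 1) = h" for h :: "real^'m"
    using basis_expansion[of h] by (simp add: scalar_mult_eq_scaleR)
  moreover have "(\<Sum>i\<in>UNIV. partial_deriv i G x * h$i) = egrad G x \<bullet> h" for h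
    by (simp add: egrad_def inner_vec_def)
  ultimately show "\<exists>d>0. \<forall>y. norm (y - x) < d \<longrightarrow> norm (G y - G x - egrad G x \<bullet> (y - x)) \<le> e * norm (y - x)"
    using d by (metis add.commute diff_add_cancel real_norm_def)
qed

lemma C1_on_has_real_derivative_curve:
  assumes "C1_on U G" "\<gamma> t \<in> U" "(\<gamma> has_vector_derivative \<gamma>') (at t)"
  shows "((\<lambda>s. G (\<gamma> s)) has_real_derivative (egrad G (\<gamma> t) \<bullet> \<gamma>')) (at t)"
proof -
  have "(G has_derivative (\<lambda>v. egrad G (\<gamma> t) \<bullet> v)) (at (\<gamma> t) within \<gamma> ` UNIV)"
    by (rule has_derivative_at_withinI[OF C1_on_has_derivative[OF assms(1,2)]])
  from vector_derivative_diff_chain_within[OF assms(3) this] show ?thesis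
    by (simp add: has_real_derivative_iff_has_vector_derivative o_def)
qed

lemma right_max_DERIV_nonpos:
  fixes \<phi> :: "real \<Rightarrow> real"
  assumes "(\<phi> has_real_derivative D) (at 0)" "\<phi> 0 = 0" "d > 0" "\<And>t. 0 < t \<Longrightarrow> t < d \<Longrightarrow> \<phi> t \<le> 0"
  shows "D \<le> 0"
proof (rule ccontr)
  assume "\<not> D \<le> 0"
  then obtain d' where d': "d' > 0" "\<And>h. 0 < h \<Longrightarrow> h < d' \<Longrightarrow> \<phi> 0 < \<phi> (0 + h)"
    using DERIV_pos_inc_right[OF assms(1)] by force
  define h where "h = min d d' / 2"
  have "0 < h" "h < d" "h < d'" using d' assms(3) by (auto simp: h_def)
  then show False using d'(2)[of h] assms(2) assms(4)[of h] by simp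
qed

lemma right_max_DERIV2_nonpos:
  fixes \<phi> \<phi>' :: "real \<Rightarrow> real"
  assumes D: "\<And>t. \<bar>t\<bar> < d \<Longrightarrow> (\<phi> has_real_derivative \<phi>' t) (at t)"
    and crit: "\<phi>' 0 = 0" and L: "(\<phi>' has_real_derivative L) (at 0)" and "\<phi> 0 = 0" "d > 0"
    and le: "\<And>t. 0 < t \<Longrightarrow> t < d \<Longrightarrow> \<phi> t \<le> 0"
  shows "L \<le> 0"
proof (rule ccontr)
  assume "\<not> L \<le> 0"
  then obtain d' where d': "d' > 0" "\<And>h. 0 < h \<Longrightarrow> h < d' \<Longrightarrow> \<phi>' 0 < \<phi>' (0 + h)"
    using DERIV_pos_inc_right[OF L] by force
  define h where "h = min d d' / 2"
  have h: "0 < h" "h < d" "h < d'" using d' \<open>d > 0\<close> by (auto simp: h_def)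
  have "(\<phi> has_real_derivative \<phi>' x) (at x)" if "0 \<le> x" "x \<le> h" for x
    using that h by (intro D) auto
  then obtain w where w: "0 < w" "w < h" "\<phi> h - \<phi> 0 = (h - 0) * \<phi>' w"
    using MVT2[of 0 h \<phi> \<phi>'] h(1) by blast
  have "\<phi>' w > 0" using d'(2)[of w] w h crit by simp
  then have "\<phi> h > 0" using w h \<open>\<phi> 0 = 0\<close> by simp
  then show False using le[of h] h by simp
qed

lemma mixed_difference_MVT:
  fixes G :: "real^'m::finite \<Rightarrow> real"
  assumes G: "cinf_on U G"
    and box: "\<And>\<sigma> \<tau>. 0 \<le> \<sigma> \<Longrightarrow> \<sigma> \<le> s \<Longrightarrow> 0 \<le> \<tau> \<Longrightarrow> \<tau> \<le> t \<Longrightarrow> x + \<sigma> *\<^sub>R axis i 1 + \<tau> *\<^sub>R axis j 1 \<in> U"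
    and s: "0 < s" and t: "0 < t"
  obtains \<sigma> \<tau> where "0 < \<sigma>" "\<sigma> < s" "0 < \<tau>" "\<tau> < t"
    "G (x + s *\<^sub>R axis i 1 + t *\<^sub>R axis j 1) - G (x + s *\<^sub>R axis i 1) - G (x + t *\<^sub>R axis j 1) + G x
      = s * t * partial_deriv j (partial_deriv i G) (x + \<sigma> *\<^sub>R axis i 1 + \<tau> *\<^sub>R axis j 1)"
proof -
  have C: "C1_on U G" by (rule cinf_on_imp_C1_on[OF G])
  define \<phi> where "\<phi> \<sigma> = G (x + t *\<^sub>R axis j 1 + \<sigma> *\<^sub>R axis i 1) - G (x + \<sigma> *\<^sub>R axis i 1)" for \<sigma>
  define \<phi>' where "\<phi>' \<sigma> = partial_deriv i G (x + t *\<^sub>R axis j 1 + \<sigma> *\<^sub>R axis i 1)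
     - partial_deriv i G (x + \<sigma> *\<^sub>R axis i 1)" for \<sigma>
  have d\<phi>: "(\<phi> has_real_derivative \<phi>' \<sigma>) (at \<sigma>)" if "0 \<le> \<sigma>" "\<sigma> \<le> s" for \<sigma>
  proof -
    have "x + t *\<^sub>R axis j 1 + \<sigma> *\<^sub>R axis i 1 \<in> U" "x + \<sigma> *\<^sub>R axis i 1 \<in> U"
      using box[OF that, of t] box[OF that, of 0] t by (simp_all add: add_ac)
    then show ?thesis unfolding \<phi>_def[abs_def] \<phi>'_def
      by (intro DERIV_diff C1_on_has_real_derivative_line[OF C])
  qed
  obtain \<sigma> where \<sigma>: "0 < \<sigma>" "\<sigma> < s" "\<phi> s - \<phi> 0 = (s - 0) * \<phi>' \<sigma>"
    using MVT2[of 0 s \<phi> \<phi>', OF s d\<phi>] by blast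
  define \<psi> where "\<psi> \<tau> = partial_deriv i G (x + \<sigma> *\<^sub>R axis i 1 + \<tau> *\<^sub>R axis j 1)" for \<tau>
  have d\<psi>: "(\<psi> has_real_derivative partial_deriv j (partial_deriv i G) (x + \<sigma> *\<^sub>R axis i 1 + \<tau> *\<^sub>R axis j 1)) (at \<tau>)"
    if "0 \<le> \<tau>" "\<tau> \<le> t" for \<tau>
    unfolding \<psi>_def[abs_def]
    by (rule C1_on_has_real_derivative_line[OF C1_on_partial_deriv[OF G] box]) (use that \<sigma> in auto)
  obtain \<tau> where \<tau>: "0 < \<tau>" "\<tau> < t"
      "\<psi> t - \<psi> 0 = (t - 0) * partial_deriv j (partial_deriv i G) (x + \<sigma> *\<^sub>R axis i 1 + \<tau> *\<^sub>R axis j 1)"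
    using MVT2[of 0 t \<psi>, OF t d\<psi>] by blast
  have "\<phi>' \<sigma> = \<psi> t - \<psi> 0" unfolding \<phi>'_def \<psi>_def by (simp add: add_ac)
  moreover have "\<phi> s - \<phi> 0 = G (x + s *\<^sub>R axis i 1 + t *\<^sub>R axis j 1) - G (x + s *\<^sub>R axis i 1)
      - G (x + t *\<^sub>R axis j 1) + G x"
    unfolding \<phi>_def by (simp add: add_ac)
  ultimately show ?thesis using \<sigma> \<tau> by (intro that[of \<sigma> \<tau>]) auto
qed

lemma dist_add_two_axes_le:
  fixes x :: "real^'m::finite"
  assumes "0 \<le> a" "a \<le> s" "0 \<le> b" "b \<le> s"
  shows "dist (x + a *\<^sub>R axis k 1 + b *\<^sub>R axis l 1) x \<le> 2 * s"
proof -
  have "norm (a *\<^sub>R (axis k 1 :: real^'m) + b *\<^sub>R axis l 1)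
      \<le> norm (a *\<^sub>R (axis k 1 :: real^'m)) + norm (b *\<^sub>R (axis l 1 :: real^'m))"
    by (rule norm_triangle_ineq)
  also have "\<dots> \<le> 2 * s" using assms by simp
  finally show ?thesis by (simp add: dist_norm add.assoc)
qed

lemma partial_deriv_commute:
  fixes G :: "real^'m::finite \<Rightarrow> real"
  assumes G: "cinf_on U G" and xU: "x \<in> U"
  shows "partial_deriv i (partial_deriv j G) x = partial_deriv j (partial_deriv i G) x"
proof (rule ccontr)
  assume ne: "partial_deriv i (partial_deriv j G) x \<noteq> partial_deriv j (partial_deriv i G) x"
  define F1 where "F1 = partial_deriv j (partial_deriv i G)"
  define F2 where "F2 = partial_deriv i (partial_deriv j G)"
  define \<epsilon> where "\<epsilon> = \<bar>F1 x - F2 x\<bar> / 2"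
  have \<epsilon>: "\<epsilon> > 0" using ne by (simp add: \<epsilon>_def F1_def F2_def)
  have opU: "open U" using G unfolding cinf_on_def by blast
  obtain r where r: "r > 0" "ball x r \<subseteq> U" using opU xU open_contains_ball by blast
  have "continuous_on U F1" "continuous_on U F2"
    using G unfolding cinf_on_def F1_def F2_def by (metis iter_partial.simps)+
  then obtain d1 d2 where d1: "d1 > 0" "\<And>y. dist y x < d1 \<Longrightarrow> dist (F1 y) (F1 x) < \<epsilon>"
      and d2: "d2 > 0" "\<And>y. dist y x < d2 \<Longrightarrow> dist (F2 y) (F2 x) < \<epsilon>"
    using xU \<epsilon> unfolding continuous_on_eq_continuous_at[OF opU] continuous_at_eps_delta by meson
  define s where "s = min r (min d1 d2) / 3"
  have s: "s > 0" "2 * s < r" "2 * s < d1" "2 * s < d2" using r d1 d2 by (auto simp: s_def)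
  note near = dist_add_two_axes_le[where x = x and s = s]
  have box: "x + a *\<^sub>R axis k 1 + b *\<^sub>R axis l 1 \<in> U"
    if "0 \<le> a" "a \<le> s" "0 \<le> b" "b \<le> s" for a b k l
    using near[OF that, of k l] s r by (auto simp: dist_commute intro!: subsetD[OF r(2)])
  obtain \<sigma>1 \<tau>1 where A: "0 < \<sigma>1" "\<sigma>1 < s" "0 < \<tau>1" "\<tau>1 < s"
    "G (x + s *\<^sub>R axis i 1 + s *\<^sub>R axis j 1) - G (x + s *\<^sub>R axis i 1) - G (x + s *\<^sub>R axis j 1) + G x
      = s * s * F1 (x + \<sigma>1 *\<^sub>R axis i 1 + \<tau>1 *\<^sub>R axis j 1)"
    using mixed_difference_MVT[OF G box s(1) s(1)] unfolding F1_def by blast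
  obtain \<sigma>2 \<tau>2 where B: "0 < \<sigma>2" "\<sigma>2 < s" "0 < \<tau>2" "\<tau>2 < s"
    "G (x + s *\<^sub>R axis j 1 + s *\<^sub>R axis i 1) - G (x + s *\<^sub>R axis j 1) - G (x + s *\<^sub>R axis i 1) + G x
      = s * s * F2 (x + \<sigma>2 *\<^sub>R axis j 1 + \<tau>2 *\<^sub>R axis i 1)"
    using mixed_difference_MVT[OF G box s(1) s(1), of j i] unfolding F2_def by blast
  have "G (x + s *\<^sub>R axis j 1 + s *\<^sub>R axis i 1) = G (x + s *\<^sub>R axis i 1 + s *\<^sub>R axis j 1)"
    by (simp add: add_ac)
  then have "s * s * F1 (x + \<sigma>1 *\<^sub>R axis i 1 + \<tau>1 *\<^sub>R axis j 1)
      = s * s * F2 (x + \<sigma>2 *\<^sub>R axis j 1 + \<tau>2 *\<^sub>R axis i 1)"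
    using A(5) B(5) by linarith
  then have "F1 (x + \<sigma>1 *\<^sub>R axis i 1 + \<tau>1 *\<^sub>R axis j 1) = F2 (x + \<sigma>2 *\<^sub>R axis j 1 + \<tau>2 *\<^sub>R axis i 1)"
    using s by simp
  moreover have "dist (F1 (x + \<sigma>1 *\<^sub>R axis i 1 + \<tau>1 *\<^sub>R axis j 1)) (F1 x) < \<epsilon>"
    using near[of \<sigma>1 \<tau>1 i j] A s by (intro d1(2)) auto
  moreover have "dist (F2 (x + \<sigma>2 *\<^sub>R axis j 1 + \<tau>2 *\<^sub>R axis i 1)) (F2 x) < \<epsilon>"
    using near[of \<sigma>2 \<tau>2 j i] B s by (intro d2(2)) auto
  moreover have "\<And>a b c d::real. \<bar>a - b\<bar> < \<bar>b - c\<bar>/2 \<Longrightarrow> \<bar>d - c\<bar> < \<bar>b - c\<bar>/2 \<Longrightarrow> a = d \<Longrightarrow> False"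
    by (simp add: abs_if split: if_split_asm)
  ultimately show False unfolding \<epsilon>_def dist_real_def by metis
qed

lemma ehess_symmetric: "cinf_on U G \<Longrightarrow> x \<in> U \<Longrightarrow> transpose (ehess G x) = ehess G x"
  using partial_deriv_commute[of U G x] by (simp add: transpose_def ehess_def vec_eq_iff)

definition great_circle :: "real^'m::finite \<Rightarrow> real^'m \<Rightarrow> real^'m \<Rightarrow> real \<Rightarrow> real^'m" where
  "great_circle a u v t = a + cos t *\<^sub>R u + sin t *\<^sub>R v"

lemma great_circle_0 [simp]: "great_circle a u v 0 = a + u"
  by (simp add: great_circle_def)

lemma great_circle_has_vector_derivative:
  "(great_circle a u v has_vector_derivative (- sin t *\<^sub>R u + cos t *\<^sub>R v)) (at t)"
  unfolding great_circle_def[abs_def] by (auto intro!: derivative_eq_intros)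

lemma continuous_great_circle: "continuous (at t) (great_circle a u v)"
  using great_circle_has_vector_derivative has_vector_derivative_continuous by blast

lemma great_circle_near_start:
  assumes "open U" "a + u \<in> U"
  obtains d where "d > 0" "\<And>t. \<bar>t\<bar> < d \<Longrightarrow> great_circle a u v t \<in> U"
proof -
  obtain r where r: "r > 0" "ball (a + u) r \<subseteq> U" using assms open_contains_ball by blast
  obtain d where "d > 0" "\<And>t. dist t 0 < d \<Longrightarrow> dist (great_circle a u v t) (a + u) < r"
    using continuous_great_circle[of 0 a u v] r(1) unfolding continuous_at_eps_delta by force
  then show ?thesis by (intro that[of d]) (auto simp: dist_commute intro!: subsetD[OF r(2)])
qed

text \<open>The term \<open>- egrad G (a + u) \<bullet> u\<close> comes from the acceleration \<open>-u\<close> of the circle at \<open>t = 0\<close>;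
  for the unit normal \<open>u\<close> it becomes the correction \<open>- (\<nabla>G \<bullet> \<nu>) I\<close> of the Gauss formula in
  \<open>cov_hess\<close>.\<close>

lemma great_circle_second_derivative:
  fixes G :: "real^'m::finite \<Rightarrow> real"
  assumes G: "cinf_on U G" and x: "a + u \<in> U"
  shows "((\<lambda>t. egrad G (great_circle a u v t) \<bullet> (- sin t *\<^sub>R u + cos t *\<^sub>R v))
          has_real_derivative (v \<bullet> (ehess G (a + u) *v v) - egrad G (a + u) \<bullet> u)) (at 0)"
proof -
  let ?\<gamma> = "great_circle a u v"
  have "((\<lambda>t. partial_deriv j G (?\<gamma> t) * (- sin t * (u$j) + cos t * (v$j))) has_real_derivative
       (egrad (partial_deriv j G) (a + u) \<bullet> v) * (v$j) - partial_deriv j G (a + u) * (u$j)) (at 0)" for j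
  proof -
    have "((\<lambda>t. partial_deriv j G (?\<gamma> t)) has_real_derivative
        egrad (partial_deriv j G) (?\<gamma> 0) \<bullet> (- sin 0 *\<^sub>R u + cos 0 *\<^sub>R v)) (at 0)"
      by (rule C1_on_has_real_derivative_curve[OF C1_on_partial_deriv[OF G] _ great_circle_has_vector_derivative])
        (use x in simp)
    then have "((\<lambda>t. partial_deriv j G (?\<gamma> t)) has_real_derivative egrad (partial_deriv j G) (a + u) \<bullet> v) (at 0)"
      by simp
    moreover have "((\<lambda>t. - sin t * (u$j) + cos t * (v$j)) has_real_derivative - (u$j)) (at 0)"
      by (auto intro!: derivative_eq_intros)
    ultimately show ?thesis using DERIV_mult by (fastforce simp: mult.commute)
  qed
  then have "((\<lambda>t. \<Sum>j\<in>UNIV. partial_deriv j G (?\<gamma> t) * (- sin t * (u$j) + cos t * (v$j))) has_real_derivative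
       (\<Sum>j\<in>UNIV. (egrad (partial_deriv j G) (a + u) \<bullet> v) * (v$j) - partial_deriv j G (a + u) * (u$j))) (at 0)"
    by (intro DERIV_sum) auto
  moreover have "(\<Sum>j\<in>UNIV. (egrad (partial_deriv j G) (a + u) \<bullet> v) * (v$j))
      = v \<bullet> (ehess G (a + u) *v v)"
    unfolding egrad_def ehess_def inner_vec_def matrix_vector_mult_def
    by (simp add: sum_distrib_left sum_distrib_right mult_ac) (subst sum.swap, simp add: mult_ac)
  ultimately show ?thesis
    by (simp add: egrad_def inner_vec_def sum_subtractf)
qed

lemma great_circle_max_conditions:
  fixes h1 h2 :: "real^'m::finite \<Rightarrow> real" and a u v :: "real^'m"
  assumes c1: "cinf_on U1 h1" and c2: "cinf_on U2 h2" and x1: "a + u \<in> U1" and x2: "a + u \<in> U2"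
    and d0: "d0 > 0"
    and le: "\<And>t. 0 < t \<Longrightarrow> t < d0 \<Longrightarrow> h1 (great_circle a u v t) \<le> c * h2 (great_circle a u v t)"
    and eq: "h1 (a + u) = c * h2 (a + u)"
  defines "g \<equiv> egrad h1 (a + u) - c *\<^sub>R egrad h2 (a + u)"
    and "H \<equiv> ehess h1 (a + u) - c *\<^sub>R ehess h2 (a + u)"
  shows "g \<bullet> v \<le> 0" and "g \<bullet> v = 0 \<Longrightarrow> v \<bullet> (H *v v) - g \<bullet> u \<le> 0"
proof -
  let ?\<gamma> = "great_circle a u v"
  define \<phi> where "\<phi> t = h1 (?\<gamma> t) - c * h2 (?\<gamma> t)" for t
  define E where "E h t = egrad h (?\<gamma> t) \<bullet> (- sin t *\<^sub>R u + cos t *\<^sub>R v)" for h t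
  define \<phi>' where "\<phi>' t = E h1 t - c * E h2 t" for t
  obtain d1 where d1: "d1 > 0" "\<And>t. \<bar>t\<bar> < d1 \<Longrightarrow> ?\<gamma> t \<in> U1"
    using great_circle_near_start[of U1 a u] c1 x1 unfolding cinf_on_def by blast
  obtain d2 where d2: "d2 > 0" "\<And>t. \<bar>t\<bar> < d2 \<Longrightarrow> ?\<gamma> t \<in> U2"
    using great_circle_near_start[of U2 a u] c2 x2 unfolding cinf_on_def by blast
  define d where "d = min d0 (min d1 d2)"
  have d: "d > 0" using d0 d1 d2 by (simp add: d_def)
  have DE: "((\<lambda>s. h (?\<gamma> s)) has_real_derivative E h t) (at t)" if "cinf_on U h" "?\<gamma> t \<in> U" for h U t
    unfolding E_def
    by (rule C1_on_has_real_derivative_curve[OF cinf_on_imp_C1_on[OF that(1)] that(2) great_circle_has_vector_derivative])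
  have D\<phi>: "(\<phi> has_real_derivative \<phi>' t) (at t)" if "\<bar>t\<bar> < d" for t
    unfolding \<phi>_def[abs_def] \<phi>'_def using that d1(2)[of t] d2(2)[of t]
    by (intro DERIV_diff DERIV_cmult DE[OF c1] DE[OF c2]) (auto simp: d_def)
  have \<phi>0: "\<phi> 0 = 0" using eq by (simp add: \<phi>_def)
  have \<phi>_le: "\<phi> t \<le> 0" if "0 < t" "t < d" for t using le[of t] that by (simp add: \<phi>_def d_def)
  have \<phi>'0: "\<phi>' 0 = g \<bullet> v" by (simp add: \<phi>'_def E_def g_def inner_diff_left)
  show "g \<bullet> v \<le> 0"
    using right_max_DERIV_nonpos[OF D\<phi>[of 0] \<phi>0 d \<phi>_le] d \<phi>'0 by simp
  assume "g \<bullet> v = 0"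
  have "(\<phi>' has_real_derivative
      (v \<bullet> (ehess h1 (a + u) *v v) - egrad h1 (a + u) \<bullet> u)
      - c * (v \<bullet> (ehess h2 (a + u) *v v) - egrad h2 (a + u) \<bullet> u)) (at 0)"
    unfolding \<phi>'_def[abs_def] E_def
    by (intro DERIV_diff DERIV_cmult great_circle_second_derivative[OF c1 x1]
        great_circle_second_derivative[OF c2 x2])
  from right_max_DERIV2_nonpos[OF D\<phi> _ this \<phi>0 d \<phi>_le] \<phi>'0 \<open>g \<bullet> v = 0\<close>
  show "v \<bullet> (H *v v) - g \<bullet> u \<le> 0"
    by (simp add: H_def g_def algebra_simps matrix_vector_mult_diff_rdistrib inner_diff_left
        inner_diff_right scaleR_matrix_vector_assoc[symmetric])
qed

section \<open>Symmetric matrices\<close>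

definition diag_mat :: "('n::finite \<Rightarrow> real) \<Rightarrow> real^'n^'n" where
  "diag_mat l = (\<chi> i j. if i = j then l i else 0)"

lemma det_diag_mat: "det (diag_mat l) = (\<Prod>i\<in>UNIV. l i)"
  by (subst det_diagonal) (auto simp: diag_mat_def)

lemma transpose_diag_mat [simp]: "transpose (diag_mat l) = diag_mat l"
  by (simp add: diag_mat_def transpose_def vec_eq_iff)

lemma diag_mat_mult:
  fixes a b :: "'n::finite \<Rightarrow> real"
  shows "diag_mat a ** diag_mat b = diag_mat (\<lambda>i. a i * b i)"
proof -
  have "(\<Sum>k\<in>UNIV. (if i = k then a i else 0) * (if k = j then b k else 0)) = (if i = j then a i * b i else 0)"
    for i j :: 'n
  proof (cases "i = j")
    case True
    have "(\<Sum>k\<in>UNIV. (if i = k then a i else 0) * (if k = j then b k else 0))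
        = (\<Sum>k\<in>UNIV. if k = j then a i * b j else 0)"
      using True by (intro sum.cong) auto
    then show ?thesis using True by simp
  qed (auto intro!: sum.neutral)
  then show ?thesis unfolding diag_mat_def matrix_matrix_mult_def by (simp add: vec_eq_iff)
qed

lemma matrix_add_rdistrib: "(B + C) ** A = B ** A + C ** A"
  for A B C :: "real^'n::finite^'n"
  by (simp add: matrix_matrix_mult_def vec_eq_iff sum.distrib algebra_simps)

lemma matrix_diff_ldistrib: "A ** (B - C) = A ** B - A ** C"
  for A B C :: "real^'n::finite^'n"
  by (simp add: matrix_matrix_mult_def vec_eq_iff sum_subtractf algebra_simps)

lemma transpose_add: "transpose (A + B) = transpose A + transpose B" for A B :: "real^'n::finite^'n"
  by (simp add: transpose_def vec_eq_iff)

lemma transpose_diff: "transpose (A - B) = transpose A - transpose B" for A B :: "real^'n::finite^'n"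
  by (simp add: transpose_def vec_eq_iff)

lemma congruence_entry:
  fixes Q M :: "real^'n::finite^'n"
  shows "(transpose Q ** M ** Q) $ i $ j = column i Q \<bullet> (M *v column j Q)"
  unfolding matrix_matrix_mult_def transpose_def column_def inner_vec_def matrix_vector_mult_def
  by (simp add: sum_distrib_left sum_distrib_right mult_ac) (subst sum.swap, simp add: mult_ac)

lemma inner_congruence:
  fixes S M :: "real^'n::finite^'n"
  shows "x \<bullet> ((transpose S ** M ** S) *v x) = (S *v x) \<bullet> (M *v (S *v x))"
proof -
  have "x \<bullet> ((transpose S ** M ** S) *v x) = x \<bullet> (transpose S *v (M *v (S *v x)))"
    by (simp add: matrix_vector_mul_assoc matrix_mul_assoc)
  also have "\<dots> = (S *v x) \<bullet> (M *v (S *v x))"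
    by (metis dot_lmul_matrix transpose_matrix_vector transpose_transpose vector_transpose_matrix)
  finally show ?thesis .
qed

lemma det_congruence: "det (transpose S ** M ** S) = det S * det S * det M"
  for M S :: "real^'n::finite^'n"
  by (simp add: det_mul)

lemma det_orthogonal_congruence: "orthogonal_matrix Q \<Longrightarrow> det (transpose Q ** M ** Q) = det M"
  for M Q :: "real^'n::finite^'n"
  using det_orthogonal_matrix[of Q] by (auto simp: det_congruence)

lemma symmetric_matrix_inner_commute:
  fixes A :: "real^'n::finite^'n"
  assumes "transpose A = A"
  shows "u \<bullet> (A *v w) = w \<bullet> (A *v u)"
  by (metis assms dot_lmul_matrix inner_commute transpose_matrix_vector)

lemma symmetric_inner_expand:
  fixes A :: "real^'n::finite^'n"
  assumes "transpose A = A"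
  shows "(u + t *\<^sub>R w) \<bullet> (A *v (u + t *\<^sub>R w))
    = u \<bullet> (A *v u) + 2 * t * (w \<bullet> (A *v u)) + t\<^sup>2 * (w \<bullet> (A *v w))"
  using symmetric_matrix_inner_commute[OF assms, of u w]
  by (simp add: matrix_vector_right_distrib matrix_vector_mult_scaleR inner_add_left inner_add_right
      algebra_simps power2_eq_square)

lemma quadratic_nonpos_imp_linear_zero:
  fixes c K :: real
  assumes "\<And>t. 2 * t * c + t\<^sup>2 * K \<le> 0"
  shows "c = 0"
proof (rule ccontr)
  assume "c \<noteq> 0"
  define t where "t = c / (\<bar>K\<bar> + 1)"
  have pos: "\<bar>K\<bar> + 1 > 0" by simp
  have c2: "c\<^sup>2 / (\<bar>K\<bar> + 1) > 0" using \<open>c \<noteq> 0\<close> by simp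
  have "t\<^sup>2 * (- \<bar>K\<bar>) \<le> t\<^sup>2 * K" by (rule mult_left_mono) auto
  moreover have "t\<^sup>2 * \<bar>K\<bar> = (c\<^sup>2 / (\<bar>K\<bar> + 1)) * (\<bar>K\<bar> / (\<bar>K\<bar> + 1))"
    unfolding t_def by (simp add: power2_eq_square)
  moreover have "\<bar>K\<bar> / (\<bar>K\<bar> + 1) \<le> 1" using pos by simp
  then have "(c\<^sup>2 / (\<bar>K\<bar> + 1)) * (\<bar>K\<bar> / (\<bar>K\<bar> + 1)) \<le> c\<^sup>2 / (\<bar>K\<bar> + 1)"
    using c2 by (metis mult.right_neutral mult_left_mono order_less_imp_le)
  moreover have "2 * t * c = 2 * (c\<^sup>2 / (\<bar>K\<bar> + 1))" unfolding t_def by (simp add: power2_eq_square)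
  ultimately have "2 * t * c + t\<^sup>2 * K > 0" using c2 by linarith
  with assms[of t] show False by simp
qed

lemma symmetric_rayleigh_max_eigenvector:
  fixes A :: "real^'n::finite^'n"
  assumes sym: "transpose A = A" and V: "subspace V" "\<forall>x\<in>V. A *v x \<in> V"
    and u: "u \<in> V" "u \<bullet> u = 1"
    and max: "\<And>x. x \<in> V \<Longrightarrow> x \<bullet> (A *v x) \<le> (u \<bullet> (A *v u)) * (x \<bullet> x)"
  shows "A *v u = (u \<bullet> (A *v u)) *\<^sub>R u"
proof -
  define M where "M = u \<bullet> (A *v u)"
  have perp: "w \<bullet> (A *v u) = 0" if "w \<in> V" "w \<bullet> u = 0" for w
  proof (rule quadratic_nonpos_imp_linear_zero[where K = "w \<bullet> (A *v w) - M * (w \<bullet> w)"])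
    fix t :: real
    have "u + t *\<^sub>R w \<in> V" using u(1) that(1) V(1) by (simp add: subspace_add subspace_scale)
    then have "(u + t *\<^sub>R w) \<bullet> (A *v (u + t *\<^sub>R w)) \<le> M * ((u + t *\<^sub>R w) \<bullet> (u + t *\<^sub>R w))"
      unfolding M_def by (rule max)
    also have "(u + t *\<^sub>R w) \<bullet> (u + t *\<^sub>R w) = 1 + t\<^sup>2 * (w \<bullet> w)"
      using u(2) that(2) by (simp add: inner_add_left inner_add_right inner_commute power2_eq_square)
    finally have "(u + t *\<^sub>R w) \<bullet> (A *v (u + t *\<^sub>R w)) \<le> M * (1 + t\<^sup>2 * (w \<bullet> w))" .
    then show "2 * t * (w \<bullet> (A *v u)) + t\<^sup>2 * (w \<bullet> (A *v w) - M * (w \<bullet> w)) \<le> 0"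
      unfolding symmetric_inner_expand[OF sym] by (simp add: M_def algebra_simps)
  qed
  define r where "r = A *v u - M *\<^sub>R u"
  have rV: "r \<in> V" unfolding r_def using V u by (simp add: subspace_diff subspace_scale)
  have ru: "r \<bullet> u = 0" unfolding r_def M_def using u(2)
    by (simp add: inner_diff_left inner_commute[of "A *v u" u])
  have "r \<bullet> r = r \<bullet> (A *v u) - M * (r \<bullet> u)" unfolding r_def by (simp add: inner_diff_right)
  then have "r \<bullet> r = 0" using perp[OF rV ru] ru by simp
  then show ?thesis unfolding r_def M_def by simp
qed

lemma symmetric_invariant_subspace_eigenvector:
  fixes A :: "real^'n::finite^'n"
  assumes sym: "transpose A = A" and V: "subspace V" "\<forall>x\<in>V. A *v x \<in> V" and w: "w \<in> V" "w \<noteq> 0"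
  obtains u where "u \<in> V" "norm u = 1" "A *v u = (u \<bullet> (A *v u)) *\<^sub>R u"
proof -
  define S where "S = V \<inter> sphere 0 1"
  have "compact S" unfolding S_def
    by (intro closed_Int_compact closed_subspace V compact_sphere)
  moreover have "(1 / norm w) *\<^sub>R w \<in> S" using w V by (simp add: S_def subspace_scale)
  then have "S \<noteq> {}" by blast
  moreover have "continuous_on S (\<lambda>x. x \<bullet> (A *v x))"
    by (intro continuous_intros linear_continuous_on matrix_vector_mul_linear)
  ultimately obtain u where u: "u \<in> S" "\<And>y. y \<in> S \<Longrightarrow> y \<bullet> (A *v y) \<le> u \<bullet> (A *v u)"
    using continuous_attains_sup by metis
  have uV: "u \<in> V" and uu: "u \<bullet> u = 1" using u(1) by (auto simp: S_def norm_eq_1)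
  have "x \<bullet> (A *v x) \<le> (u \<bullet> (A *v u)) * (x \<bullet> x)" if "x \<in> V" for x
  proof (cases "x = 0")
    case False
    have "(1 / norm x) *\<^sub>R x \<in> S" using that False V by (simp add: S_def subspace_scale)
    from u(2)[OF this] have "(x \<bullet> (A *v x)) / (norm x)\<^sup>2 \<le> u \<bullet> (A *v u)"
      by (simp add: matrix_vector_mult_scaleR power2_eq_square divide_simps)
    then show ?thesis using False by (simp add: divide_le_eq power2_norm_eq_inner mult.commute)
  qed simp
  from symmetric_rayleigh_max_eigenvector[OF sym V uV uu this] show ?thesis
    using that uV u(1) by (simp add: S_def)
qed

lemma unit_orthogonal_slice:
  fixes u :: "'a::euclidean_space"
  assumes V: "subspace V" and u: "u \<in> V" "u \<bullet> u = 1"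
  shows "subspace (V \<inter> {y. y \<bullet> u = 0})" and "dim V = dim (V \<inter> {y. y \<bullet> u = 0}) + 1"
proof -
  define V' where "V' = V \<inter> {y. y \<bullet> u = 0}"
  show subV': "subspace (V \<inter> {y. y \<bullet> u = 0})"
    by (intro subspace_inter V) (auto simp: subspace_def inner_add_left)
  have "span (insert u V') = V"
  proof
    show "span (insert u V') \<subseteq> V" using V u by (intro span_minimal) (auto simp: V'_def)
    show "V \<subseteq> span (insert u V')"
    proof
      fix x assume x: "x \<in> V"
      have "x - (x \<bullet> u) *\<^sub>R u \<in> V'" using x u V
        by (simp add: V'_def subspace_diff subspace_scale inner_diff_left)
      then have "(x \<bullet> u) *\<^sub>R u + (x - (x \<bullet> u) *\<^sub>R u) \<in> span (insert u V')"
        by (intro span_add span_scale span_base) auto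
      then show "x \<in> span (insert u V')" by simp
    qed
  qed
  moreover have "u \<notin> span V'"
    using u subV' by (metis V'_def span_eq_iff IntD2 mem_Collect_eq zero_neq_one)
  ultimately show "dim V = dim V' + 1" by (metis dim_span dim_insert Suc_eq_plus1)
qed

lemma symmetric_invariant_subspace_eigenbasis:
  fixes A :: "real^'n::finite^'n"
  assumes sym: "transpose A = A"
  shows "subspace V \<Longrightarrow> dim V = n \<Longrightarrow> \<forall>x\<in>V. A *v x \<in> V \<Longrightarrow>
    \<exists>B. B \<subseteq> V \<and> finite B \<and> card B = n \<and> pairwise orthogonal B \<and>
        (\<forall>b\<in>B. norm b = 1 \<and> (\<exists>l. A *v b = l *\<^sub>R b))"
proof (induction n arbitrary: V)
  case 0
  then show ?case by (intro exI[of _ "{}"]) auto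
next
  case (Suc n)
  note subV = Suc.prems(1) and dimV = Suc.prems(2) and inv = Suc.prems(3)
  have "\<not> V \<subseteq> {0}" using dimV dim_eq_0[of V] by simp
  then obtain w where "w \<in> V" "w \<noteq> 0" by blast
  then obtain u where uV: "u \<in> V" and nu: "norm u = 1" and eig: "\<exists>l. A *v u = l *\<^sub>R u"
    using symmetric_invariant_subspace_eigenvector[OF sym subV inv] by metis
  have uu: "u \<bullet> u = 1" using nu by (simp add: norm_eq_1)
  define V' where "V' = V \<inter> {y. y \<bullet> u = 0}"
  have subV': "subspace V'" and "dim V = dim V' + 1"
    using unit_orthogonal_slice[OF subV uV uu] by (simp_all add: V'_def)
  then have dimV': "dim V' = n" using dimV by simp
  have uV': "u \<notin> V'" using uu by (simp add: V'_def)
  have inv': "\<forall>x\<in>V'. A *v x \<in> V'"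
  proof
    fix x assume x: "x \<in> V'"
    have "(A *v x) \<bullet> u = x \<bullet> (A *v u)"
      using symmetric_matrix_inner_commute[OF sym, of u x] by (simp add: inner_commute)
    then show "A *v x \<in> V'" using x inv eig by (auto simp: V'_def)
  qed
  obtain B where B: "B \<subseteq> V'" "finite B" "card B = n" "pairwise orthogonal B"
      "\<forall>b\<in>B. norm b = 1 \<and> (\<exists>l. A *v b = l *\<^sub>R b)"
    using Suc.IH[OF subV' dimV' inv'] by blast
  show ?case
  proof (intro exI[of _ "insert u B"] conjI)
    show "insert u B \<subseteq> V" using B(1) uV by (auto simp: V'_def)
    show "finite (insert u B)" using B by simp
    show "card (insert u B) = Suc n" using B uV' by (auto simp: card_insert_if)
    show "pairwise orthogonal (insert u B)"
      using B(1,4) unfolding pairwise_insert by (auto simp: V'_def orthogonal_def inner_commute)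
    show "\<forall>b\<in>insert u B. norm b = 1 \<and> (\<exists>l. A *v b = l *\<^sub>R b)" using B(5) nu eig by auto
  qed
qed

lemma symmetric_matrix_diagonalization:
  fixes A :: "real^'n::finite^'n"
  assumes sym: "transpose A = A"
  obtains Q l where "orthogonal_matrix Q" "transpose Q ** A ** Q = diag_mat l"
proof -
  obtain B where B: "finite B" "card B = CARD('n)" "pairwise orthogonal B"
      "\<forall>b\<in>B. norm b = 1 \<and> (\<exists>l. A *v b = l *\<^sub>R b)"
    using symmetric_invariant_subspace_eigenbasis[OF sym, of UNIV "CARD('n)"] by auto
  obtain f where f: "bij_betw f (UNIV::'n set) B"
    using B(1,2) by (metis finite_class.finite_UNIV finite_same_card_bij)
  have fB: "f i \<in> B" for i using f by (auto simp: bij_betw_def)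
  have nf: "norm (f i) = 1" for i using fB B(4) by blast
  have of: "i \<noteq> j \<Longrightarrow> orthogonal (f i) (f j)" for i j
    using B(3) f fB by (auto simp: pairwise_def bij_betw_def inj_on_def, metis)
  define l where "l i = (SOME l. A *v f i = l *\<^sub>R f i)" for i
  have el: "A *v f i = l i *\<^sub>R f i" for i
    unfolding l_def by (rule someI_ex) (use fB B(4) in blast)
  define Q where "Q = (\<chi> i j. f j $ i)"
  have col: "column j Q = f j" for j by (simp add: Q_def column_def vec_eq_iff)
  have "(transpose Q ** A ** Q) $ i $ j = diag_mat l $ i $ j" for i j
  proof -
    have "(transpose Q ** A ** Q) $ i $ j = l j * (f i \<bullet> f j)"
      by (simp add: congruence_entry col el)
    also have "\<dots> = (if i = j then l i else 0)"
      using of[of i j] nf[of i] by (auto simp: orthogonal_def norm_eq_1)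
    finally show ?thesis by (simp add: diag_mat_def)
  qed
  then show ?thesis
    by (intro that[of Q l]) (simp_all add: orthogonal_matrix_orthonormal_columns col nf of vec_eq_iff)
qed

lemma diagonalization_entry:
  fixes A Q :: "real^'n::finite^'n"
  assumes "orthogonal_matrix Q" "transpose Q ** A ** Q = diag_mat l"
  shows "l i = column i Q \<bullet> (A *v column i Q)" and "column i Q \<noteq> 0"
proof -
  have "l i = diag_mat l $ i $ i" by (simp add: diag_mat_def)
  then show "l i = column i Q \<bullet> (A *v column i Q)" unfolding assms(2)[symmetric] congruence_entry .
  have "norm (column i Q) = 1" using assms(1) by (simp add: orthogonal_matrix_orthonormal_columns)
  then show "column i Q \<noteq> 0" by auto
qed

lemma positive_definite_congruent_identity:
  fixes A :: "real^'n::finite^'n"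
  assumes sym: "transpose A = A" and pos: "\<And>x. x \<noteq> 0 \<Longrightarrow> x \<bullet> (A *v x) > 0"
  obtains S :: "real^'n^'n" where "transpose S ** A ** S = mat 1"
proof -
  obtain Q l where Q: "orthogonal_matrix Q" "transpose Q ** A ** Q = diag_mat l"
    by (rule symmetric_matrix_diagonalization[OF sym])
  have lpos: "l i > 0" for i using diagonalization_entry[OF Q, of i] pos by simp
  define D where "D = diag_mat (\<lambda>i. 1 / sqrt (l i))"
  have "transpose (Q ** D) ** A ** (Q ** D) = D ** (transpose Q ** A ** Q) ** D"
    by (simp add: D_def matrix_transpose_mul matrix_mul_assoc)
  also have "\<dots> = diag_mat (\<lambda>i. 1 / sqrt (l i) * l i * (1 / sqrt (l i)))"
    by (simp add: Q(2) D_def diag_mat_mult)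
  also have "\<dots> = mat 1"
  proof -
    have "1 / sqrt (l i) * l i * (1 / sqrt (l i)) = 1" for i
      using lpos[of i] by (simp add: field_simps)
    then show ?thesis by (simp add: diag_mat_def mat_def)
  qed
  finally show ?thesis by (rule that)
qed

lemma det_identity_add_psd:
  fixes D :: "real^'n::finite^'n"
  assumes sym: "transpose D = D" and psd: "\<And>x. x \<bullet> (D *v x) \<ge> 0"
  shows "det (mat 1 + D) \<ge> 1"
proof -
  obtain R d where R: "orthogonal_matrix R" "transpose R ** D ** R = diag_mat d"
    by (rule symmetric_matrix_diagonalization[OF sym])
  have "transpose R ** (mat 1 + D) ** R = transpose R ** R + transpose R ** D ** R"
    by (simp add: matrix_add_ldistrib matrix_add_rdistrib)
  also have "\<dots> = diag_mat (\<lambda>i. 1 + d i)"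
    using R by (simp add: orthogonal_matrix diag_mat_def mat_def vec_eq_iff)
  finally have "det (transpose R ** (mat 1 + D) ** R) = (\<Prod>i\<in>UNIV. 1 + d i)"
    by (simp add: det_diag_mat)
  then have "det (mat 1 + D) = (\<Prod>i\<in>UNIV. 1 + d i)"
    by (simp add: det_orthogonal_congruence[OF R(1)])
  also have "\<dots> \<ge> 1"
    using diagonalization_entry[OF R] psd by (intro prod_ge_1) auto
  finally show ?thesis .
qed

lemma det_le_det_add_psd:
  fixes A C :: "real^'n::finite^'n"
  assumes sA: "transpose A = A" and sC: "transpose C = C"
    and pA: "\<And>x. x \<noteq> 0 \<Longrightarrow> x \<bullet> (A *v x) > 0" and pC: "\<And>x. x \<bullet> (C *v x) \<ge> 0"
  shows "det A \<le> det (A + C)"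
proof -
  obtain S :: "real^'n^'n" where SAS: "transpose S ** A ** S = mat 1"
    by (rule positive_definite_congruent_identity[OF sA pA])
  define D where "D = transpose S ** C ** S"
  have "det (mat 1 + D) \<ge> 1"
    by (rule det_identity_add_psd)
      (simp add: D_def matrix_transpose_mul sC matrix_mul_assoc, simp add: D_def inner_congruence pC)
  moreover have "mat 1 + D = transpose S ** (A + C) ** S"
    by (simp add: D_def SAS[symmetric] matrix_add_ldistrib matrix_add_rdistrib)
  ultimately have "det S * det S * det (A + C) \<ge> 1" by (simp add: det_congruence)
  moreover have SA: "det S * det S * det A = 1" using SAS det_congruence[of S A] by simp
  moreover have "det S * det S > 0"
    using SA by (metis mult_eq_0_iff not_real_square_gt_zero zero_neq_one)
  ultimately show ?thesis by (metis mult_le_cancel_left_pos)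
qed

lemma outer_mult_outer: "outer a b ** outer c d = (b \<bullet> c) *\<^sub>R outer a d" for a b c d :: "real^'n::finite"
  by (simp add: outer_def matrix_matrix_mult_def vec_eq_iff inner_vec_def sum_distrib_left
      sum_distrib_right mult_ac)

lemma matrix_mult_outer: "M ** outer a b = outer (M *v a) b" for a b :: "real^'n::finite" and M :: "real^'n^'n"
  by (simp add: outer_def matrix_matrix_mult_def matrix_vector_mult_def vec_eq_iff sum_distrib_left
      sum_distrib_right mult_ac)

lemma outer_mult_matrix: "outer a b ** M = outer a (transpose M *v b)"
  for a b :: "real^'n::finite" and M :: "real^'n^'n"
  by (simp add: outer_def matrix_matrix_mult_def matrix_vector_mult_def transpose_def vec_eq_iff
      sum_distrib_left sum_distrib_right mult_ac)

lemma outer_mult_vector: "outer a b *v x = (b \<bullet> x) *\<^sub>R a" for a b x :: "real^'n::finite"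
  by (simp add: outer_def matrix_vector_mult_def inner_vec_def vec_eq_iff sum_distrib_left
      sum_distrib_right mult_ac)

lemma transpose_outer_self: "transpose (outer a a) = outer a a" for a :: "real^'n::finite"
  by (simp add: transpose_def outer_def vec_eq_iff mult.commute)

lemma tproj_mult_vector: "tproj \<nu> *v x = x - (\<nu> \<bullet> x) *\<^sub>R \<nu>" for \<nu> x :: "real^'n::finite"
  by (simp add: tproj_def matrix_vector_mult_diff_rdistrib outer_mult_vector)

lemma transpose_tproj: "transpose (tproj \<nu>) = tproj \<nu>" for \<nu> :: "real^'n::finite"
  by (simp add: tproj_def transpose_def outer_def mat_def vec_eq_iff mult.commute eq_commute)

lemma inner_tproj: "x \<bullet> (tproj \<nu> *v y) = (tproj \<nu> *v x) \<bullet> y" for \<nu> x y :: "real^'n::finite"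
  by (simp add: tproj_mult_vector inner_diff_left inner_diff_right inner_commute)

lemma tproj_orthogonal:
  fixes \<nu> x :: "real^'n::finite"
  assumes "norm \<nu> = 1"
  shows "(tproj \<nu> *v x) \<bullet> \<nu> = 0"
proof -
  have "\<nu> \<bullet> \<nu> = 1" using assms by (simp add: norm_eq_1)
  then show ?thesis by (simp add: tproj_mult_vector inner_diff_left inner_commute[of x \<nu>])
qed

lemma tproj_fixes_orthogonal: "x \<bullet> \<nu> = 0 \<Longrightarrow> tproj \<nu> *v x = x" for \<nu> x :: "real^'n::finite"
  by (simp add: tproj_mult_vector inner_commute)

lemma tproj_idem_vector: "norm \<nu> = 1 \<Longrightarrow> tproj \<nu> *v (tproj \<nu> *v x) = tproj \<nu> *v x"
  for \<nu> x :: "real^'n::finite"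
  by (rule tproj_fixes_orthogonal[OF tproj_orthogonal])

lemma tproj_idem: "norm \<nu> = 1 \<Longrightarrow> tproj \<nu> ** tproj \<nu> = tproj \<nu>" for \<nu> :: "real^'n::finite"
  by (metis matrix_eq matrix_vector_mul_assoc tproj_idem_vector)

lemma det_scalar_add_outer:
  fixes \<nu> :: "real^'n::finite"
  assumes n1: "norm \<nu> = 1"
  shows "det (c *\<^sub>R mat 1 + d *\<^sub>R outer \<nu> \<nu>) = c ^ (CARD('n) - 1) * (c + d)"
proof -
  fix k :: 'n
  obtain Q where Q: "orthogonal_matrix Q" "Q *v axis k 1 = \<nu>"
    using orthogonal_matrix_exists_basis[OF n1] by metis
  have tQ: "transpose Q *v \<nu> = axis k 1"
    using Q by (metis matrix_vector_mul_assoc matrix_vector_mul_lid orthogonal_matrix)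
  have "transpose Q ** (c *\<^sub>R mat 1 + d *\<^sub>R outer \<nu> \<nu>) ** Q
      = c *\<^sub>R (transpose Q ** Q) + d *\<^sub>R (transpose Q ** outer \<nu> \<nu> ** Q)"
    by (simp add: matrix_add_ldistrib matrix_add_rdistrib matrix_scalar_ac scalar_matrix_assoc[symmetric])
  also have "\<dots> = c *\<^sub>R mat 1 + d *\<^sub>R outer (axis k 1) (axis k 1)"
    using Q(1) tQ by (simp add: orthogonal_matrix matrix_mult_outer outer_mult_matrix)
  also have "\<dots> = diag_mat (\<lambda>i. if i = k then c + d else c)"
    by (auto simp: diag_mat_def mat_def outer_def axis_def vec_eq_iff)
  finally have "det (transpose Q ** (c *\<^sub>R mat 1 + d *\<^sub>R outer \<nu> \<nu>) ** Q)
      = (\<Prod>i\<in>UNIV. if i = k then c + d else c)"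
    by (simp add: det_diag_mat)
  then have "det (c *\<^sub>R mat 1 + d *\<^sub>R outer \<nu> \<nu>) = (\<Prod>i\<in>UNIV. if i = k then c + d else c)"
    by (simp add: det_orthogonal_congruence[OF Q(1)])
  also have "\<dots> = (c + d) * (\<Prod>i\<in>UNIV - {k}. c)"
    by (subst prod.remove[of UNIV k]) (auto intro!: prod.cong)
  also have "\<dots> = c ^ (CARD('n) - 1) * (c + d)"
    by (simp add: card_Diff_singleton)
  finally show ?thesis .
qed

lemma det_scale_tangential:
  fixes W :: "real^'n::finite^'n" and \<nu> :: "real^'n"
  assumes n1: "norm \<nu> = 1" and WP: "W ** tproj \<nu> = W"
  shows "det (c *\<^sub>R W + outer \<nu> \<nu>) = c ^ (CARD('n) - 1) * det (W + outer \<nu> \<nu>)"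
proof -
  have nn: "\<nu> \<bullet> \<nu> = 1" using n1 by (simp add: norm_eq_1)
  have "tproj \<nu> *v \<nu> = 0" by (simp add: tproj_mult_vector nn)
  then have Wnu: "W *v \<nu> = 0" by (metis WP matrix_vector_mul_assoc matrix_vector_mult_0_right)
  have oo: "outer \<nu> \<nu> ** outer \<nu> \<nu> = outer \<nu> \<nu>" by (simp add: outer_mult_outer nn)
  have "(W + outer \<nu> \<nu>) ** (c *\<^sub>R tproj \<nu> + outer \<nu> \<nu>) = c *\<^sub>R W + outer \<nu> \<nu>"
  proof -
    have "W ** (c *\<^sub>R tproj \<nu>) = c *\<^sub>R W"
      by (simp add: matrix_scalar_ac scalar_matrix_assoc[symmetric] WP)
    moreover have "outer \<nu> \<nu> ** (c *\<^sub>R tproj \<nu>) = 0"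
      by (simp add: matrix_scalar_ac scalar_matrix_assoc[symmetric] tproj_def matrix_diff_ldistrib oo)
    moreover have "W ** outer \<nu> \<nu> = 0" unfolding matrix_mult_outer Wnu by (simp add: outer_def vec_eq_iff)
    ultimately show ?thesis by (simp add: matrix_add_ldistrib matrix_add_rdistrib oo)
  qed
  moreover have "c *\<^sub>R tproj \<nu> + outer \<nu> \<nu> = c *\<^sub>R mat 1 + (1 - c) *\<^sub>R outer \<nu> \<nu>"
    by (simp add: tproj_def algebra_simps)
  ultimately have "c *\<^sub>R W + outer \<nu> \<nu> = (W + outer \<nu> \<nu>) ** (c *\<^sub>R mat 1 + (1 - c) *\<^sub>R outer \<nu> \<nu>)"
    by simp
  then show ?thesis using det_scalar_add_outer[OF n1, of c "1 - c"] by (simp add: det_mul)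
qed

lemma tangential_positive_add_outer:
  fixes W :: "real^'n::finite^'n" and \<nu> :: "real^'n"
  assumes n1: "norm \<nu> = 1" and sym: "transpose W = W" and tang: "W ** tproj \<nu> = W"
    and pos: "\<And>v. v \<bullet> \<nu> = 0 \<Longrightarrow> v \<noteq> 0 \<Longrightarrow> v \<bullet> (W *v v) > 0"
    and x: "x \<noteq> 0"
  shows "x \<bullet> ((W + outer \<nu> \<nu>) *v x) > 0"
proof -
  let ?P = "tproj \<nu>"
  have "transpose (W ** ?P) = ?P ** W" by (simp add: matrix_transpose_mul transpose_tproj sym)
  then have "?P ** W = W" by (simp add: tang sym)
  then have "transpose ?P ** W ** ?P = W" by (simp add: transpose_tproj tang)
  then have "x \<bullet> (W *v x) = (?P *v x) \<bullet> (W *v (?P *v x))"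
    using inner_congruence[of x ?P W] by simp
  then have eq: "x \<bullet> ((W + outer \<nu> \<nu>) *v x) = (?P *v x) \<bullet> (W *v (?P *v x)) + (\<nu> \<bullet> x)\<^sup>2"
    by (simp add: matrix_vector_mult_add_rdistrib inner_add_right outer_mult_vector
        power2_eq_square inner_commute)
  show ?thesis
  proof (cases "?P *v x = 0")
    case True
    then have "\<nu> \<bullet> x \<noteq> 0" using x by (auto simp: tproj_mult_vector)
    then show ?thesis unfolding eq True by simp
  next
    case False
    then show ?thesis
      unfolding eq using pos[OF tproj_orthogonal[OF n1] False] by (simp add: add_pos_nonneg)
  qed
qed

lemma det_tangential_comparison:
  fixes W1 W2 :: "real^'n::finite^'n" and \<nu> :: "real^'n"
  assumes n1: "norm \<nu> = 1"
    and sym: "transpose W1 = W1" "transpose W2 = W2"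
    and tang: "W1 ** tproj \<nu> = W1" "W2 ** tproj \<nu> = W2"
    and pos: "\<And>v. v \<bullet> \<nu> = 0 \<Longrightarrow> v \<noteq> 0 \<Longrightarrow> v \<bullet> (W1 *v v) > 0"
    and le: "\<And>x. x \<bullet> (W1 *v x) \<le> c * (x \<bullet> (W2 *v x))"
  shows "det (W1 + outer \<nu> \<nu>) \<le> c ^ (CARD('n) - 1) * det (W2 + outer \<nu> \<nu>)"
proof -
  have "x \<bullet> ((W1 + outer \<nu> \<nu>) *v x) > 0" if "x \<noteq> 0" for x
    by (rule tangential_positive_add_outer[OF n1 sym(1) tang(1) pos that])
  moreover have "x \<bullet> ((c *\<^sub>R W2 - W1) *v x) \<ge> 0" for x
    using le[of x] by (simp add: matrix_vector_mult_diff_rdistrib inner_diff_right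
        scaleR_matrix_vector_assoc[symmetric])
  moreover have "transpose (W1 + outer \<nu> \<nu>) = W1 + outer \<nu> \<nu>"
    by (simp add: transpose_add sym transpose_outer_self)
  moreover have "transpose (c *\<^sub>R W2 - W1) = c *\<^sub>R W2 - W1"
    by (simp add: transpose_diff transpose_scalar sym)
  ultimately have "det (W1 + outer \<nu> \<nu>) \<le> det ((W1 + outer \<nu> \<nu>) + (c *\<^sub>R W2 - W1))"
    by (intro det_le_det_add_psd)
  also have "(W1 + outer \<nu> \<nu>) + (c *\<^sub>R W2 - W1) = c *\<^sub>R W2 + outer \<nu> \<nu>" by simp
  also have "det \<dots> = c ^ (CARD('n) - 1) * det (W2 + outer \<nu> \<nu>)"
    by (rule det_scale_tangential[OF n1 tang(2)])
  finally show ?thesis .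
qed

section \<open>The spherical cap\<close>

lemma cap_eq_sphere_Int: "cap \<theta> k = {\<zeta>. 0 \<le> \<zeta> $ k} \<inter> sphere (cap_center \<theta> k) 1"
  by (auto simp: cap_def dist_norm norm_minus_commute)

lemma compact_cap: "compact (cap \<theta> k)"
  unfolding cap_eq_sphere_Int
  by (intro closed_Int_compact compact_sphere closed_Collect_le continuous_intros)

lemma norm_cap_normal: "\<zeta> \<in> cap \<theta> k \<Longrightarrow> norm (cap_normal \<theta> k \<zeta>) = 1"
  by (simp add: cap_def cap_normal_def)

lemma cap_center_add_normal [simp]: "cap_center \<theta> k + cap_normal \<theta> k \<zeta> = \<zeta>"
  by (simp add: cap_normal_def)

lemma norm_great_circle_offset:
  fixes \<nu> v :: "real^'n::finite"
  assumes "norm \<nu> = 1" "norm v = 1" "v \<bullet> \<nu> = 0"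
  shows "norm (great_circle a \<nu> v t - a) = 1"
proof -
  have "(cos t *\<^sub>R \<nu> + sin t *\<^sub>R v) \<bullet> (cos t *\<^sub>R \<nu> + sin t *\<^sub>R v) = (cos t)\<^sup>2 + (sin t)\<^sup>2"
    using assms by (simp add: inner_add_left inner_add_right norm_eq_1 inner_commute power2_eq_square)
  then show ?thesis by (simp add: great_circle_def norm_eq_1 add.assoc)
qed

lemma great_circle_enters_cap_interior:
  fixes k :: "'m::finite" and v :: "real^'m"
  assumes \<zeta>: "\<zeta> \<in> cap \<theta> k" and v: "norm v = 1" "v \<bullet> cap_normal \<theta> k \<zeta> = 0"
    and inward: "\<zeta> $ k > 0 \<or> v $ k > 0"
  obtains d where "d > 0"
    "\<And>t. 0 < t \<Longrightarrow> t < d \<Longrightarrow> great_circle (cap_center \<theta> k) (cap_normal \<theta> k \<zeta>) v t \<in> cap_interior \<theta> k"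
proof -
  define \<gamma> where "\<gamma> = great_circle (cap_center \<theta> k) (cap_normal \<theta> k \<zeta>) v"
  have \<gamma>0: "\<gamma> 0 = \<zeta>" by (simp add: \<gamma>_def)
  have D: "((\<lambda>t. \<gamma> t $ k) has_real_derivative v $ k) (at 0)"
    unfolding \<gamma>_def great_circle_def by (auto intro!: derivative_eq_intros)
  have "\<exists>d>0. \<forall>t. 0 < t \<and> t < d \<longrightarrow> \<gamma> t $ k > 0"
  proof (cases "\<zeta> $ k > 0")
    case True
    have "((\<lambda>t. \<gamma> t $ k) \<longlongrightarrow> \<gamma> 0 $ k) (at 0)"
      using DERIV_isCont[OF D] by (simp add: isCont_def)
    from LIM_fun_gt_zero[OF this] True \<gamma>0 obtain r where "r > 0" "\<And>t. t \<noteq> 0 \<and> \<bar>0 - t\<bar> < r \<Longrightarrow> 0 < \<gamma> t $ k"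
      by auto
    then show ?thesis by (intro exI[of _ r]) auto
  next
    case False
    then have "v $ k > 0" using inward by simp
    from DERIV_pos_inc_right[OF D this] obtain d where "d > 0" "\<And>h. 0 < h \<Longrightarrow> h < d \<Longrightarrow> \<gamma> 0 $ k < \<gamma> (0 + h) $ k"
      by blast
    then show ?thesis using \<zeta> \<gamma>0 by (intro exI[of _ d]) (force simp: cap_def)
  qed
  then obtain d where "d > 0" "\<And>t. 0 < t \<Longrightarrow> t < d \<Longrightarrow> \<gamma> t $ k > 0" by blast
  moreover have "norm (\<gamma> t - cap_center \<theta> k) = 1" for t
    unfolding \<gamma>_def using norm_cap_normal[OF \<zeta>] v by (intro norm_great_circle_offset) auto
  ultimately show ?thesis
    by (intro that[of d]) (auto simp: cap_interior_def cap_def \<gamma>_def less_imp_le)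
qed

lemma cap_boundary_inward_tangent:
  fixes k :: "'m::finite"
  assumes \<zeta>: "\<zeta> \<in> cap_bdry \<theta> k" and \<theta>: "0 < \<theta>" "\<theta> < pi"
  defines "w \<equiv> tproj (cap_normal \<theta> k \<zeta>) *v axis k 1"
  shows "w \<bullet> cap_normal \<theta> k \<zeta> = 0" and "w $ k > 0"
    and "cap_conormal \<theta> k \<zeta> = - (1 / norm w) *\<^sub>R w"
proof -
  let ?\<nu> = "cap_normal \<theta> k \<zeta>"
  have "?\<nu> $ k = cos \<theta>" using \<zeta> by (simp add: cap_bdry_def cap_normal_def cap_center_def cap_e_def)
  then have "w = axis k 1 - cos \<theta> *\<^sub>R ?\<nu>" by (simp add: w_def tproj_mult_vector inner_axis)
  then have "w $ k = 1 - (cos \<theta>)\<^sup>2" using \<open>?\<nu> $ k = cos \<theta>\<close> by (simp add: power2_eq_square)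
  then show "w $ k > 0" using sin_gt_zero[OF \<theta>] by (simp add: cos_squared_eq)
  show "w \<bullet> ?\<nu> = 0"
    using \<zeta> unfolding w_def by (intro tproj_orthogonal norm_cap_normal) (simp add: cap_bdry_def)
  show "cap_conormal \<theta> k \<zeta> = - (1 / norm w) *\<^sub>R w"
    by (simp add: cap_conormal_def w_def Let_def)
qed

lemma cap_subset_closure_interior:
  assumes "0 < \<theta>" "\<theta> < pi"
  shows "cap \<theta> k \<subseteq> closure (cap_interior \<theta> k)"
proof
  fix \<zeta> assume \<zeta>: "\<zeta> \<in> cap \<theta> k"
  show "\<zeta> \<in> closure (cap_interior \<theta> k)"
  proof (cases "\<zeta> $ k > 0")
    case True
    then show ?thesis using \<zeta> by (simp add: cap_interior_def closure_subset[THEN subsetD])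
  next
    case False
    then have bdry: "\<zeta> \<in> cap_bdry \<theta> k" using \<zeta> by (simp add: cap_def cap_bdry_def)
    define w where "w = tproj (cap_normal \<theta> k \<zeta>) *v axis k 1"
    have w: "w \<bullet> cap_normal \<theta> k \<zeta> = 0" "w $ k > 0"
      using cap_boundary_inward_tangent[OF bdry assms] by (simp_all add: w_def)
    then have "w \<noteq> 0" by auto
    define \<gamma> where "\<gamma> = great_circle (cap_center \<theta> k) (cap_normal \<theta> k \<zeta>) ((1 / norm w) *\<^sub>R w)"
    obtain d where d: "d > 0" "\<And>t. 0 < t \<Longrightarrow> t < d \<Longrightarrow> \<gamma> t \<in> cap_interior \<theta> k"
      using great_circle_enters_cap_interior[OF \<zeta>, of "(1 / norm w) *\<^sub>R w"] w \<open>w \<noteq> 0\<close>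
      unfolding \<gamma>_def by auto
    have "(\<gamma> \<longlongrightarrow> \<gamma> 0) (at 0)"
      using continuous_great_circle[of 0] unfolding \<gamma>_def isCont_def .
    then have lim: "(\<gamma> \<longlongrightarrow> \<zeta>) (at_right 0)"
      by (simp add: \<gamma>_def tendsto_mono[OF at_within_le_at])
    have "\<forall>\<^sub>F t in at_right 0. \<gamma> t \<in> closure (cap_interior \<theta> k)"
      using d closure_subset by (auto simp: eventually_at_right_field intro!: exI[of _ d])
    from Lim_in_closed_set[OF closed_closure this trivial_limit_at_right_real lim] show ?thesis .
  qed
qed

lemma cov_W_mult_tproj:
  assumes "\<zeta> \<in> cap \<theta> k"
  shows "cov_W \<theta> k G \<zeta> ** tproj (cap_normal \<theta> k \<zeta>) = cov_W \<theta> k G \<zeta>"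
  using tproj_idem[OF norm_cap_normal[OF assms]]
  by (simp add: cov_W_def cov_hess_def Let_def matrix_add_rdistrib scalar_matrix_assoc[symmetric]
      matrix_mul_assoc[symmetric])

lemma transpose_cov_W:
  assumes "transpose (ehess G \<zeta>) = ehess G \<zeta>"
  shows "transpose (cov_W \<theta> k G \<zeta>) = cov_W \<theta> k G \<zeta>"
  by (simp add: cov_W_def cov_hess_def Let_def transpose_add transpose_diff matrix_transpose_mul
      transpose_scalar assms transpose_tproj matrix_mul_assoc)

lemma inner_cov_W:
  fixes k :: "'m::finite" and x :: "real^'m"
  assumes "\<zeta> \<in> cap \<theta> k"
  defines "y \<equiv> tproj (cap_normal \<theta> k \<zeta>) *v x"
  shows "x \<bullet> (cov_W \<theta> k G \<zeta> *v x) = y \<bullet> (ehess G \<zeta> *v y)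
     - (egrad G \<zeta> \<bullet> cap_normal \<theta> k \<zeta>) * (y \<bullet> y) + G \<zeta> * (y \<bullet> y)"
proof -
  let ?P = "tproj (cap_normal \<theta> k \<zeta>)"
  define s where "s = egrad G \<zeta> \<bullet> cap_normal \<theta> k \<zeta>"
  have "cov_W \<theta> k G \<zeta> *v x = ?P *v (ehess G \<zeta> *v y - s *\<^sub>R y) + G \<zeta> *\<^sub>R y"
    by (simp add: cov_W_def cov_hess_def Let_def y_def s_def matrix_vector_mult_add_rdistrib
        matrix_vector_mul_assoc[symmetric] matrix_vector_mult_diff_rdistrib
        scaleR_matrix_vector_assoc[symmetric])
  moreover have "x \<bullet> (?P *v z) = y \<bullet> z" for z unfolding y_def by (rule inner_tproj)
  moreover have "x \<bullet> y = y \<bullet> y"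
    using inner_tproj[of x "cap_normal \<theta> k \<zeta>" y] tproj_idem_vector[OF norm_cap_normal[OF assms(1)], of x]
    by (simp add: y_def)
  ultimately show ?thesis by (simp add: inner_add_right inner_diff_right s_def)
qed

lemma continuous_on_matrix_mult [continuous_intros]:
  fixes A B :: "'a::topological_space \<Rightarrow> real^'n::finite^'n"
  shows "continuous_on S A \<Longrightarrow> continuous_on S B \<Longrightarrow> continuous_on S (\<lambda>x. A x ** B x)"
  unfolding matrix_matrix_mult_def by (intro continuous_intros)

lemma continuous_on_matrix_vector_mult [continuous_intros]:
  fixes A :: "'a::topological_space \<Rightarrow> real^'n::finite^'n"
  shows "continuous_on S A \<Longrightarrow> continuous_on S b \<Longrightarrow> continuous_on S (\<lambda>x. A x *v b x)"
  unfolding matrix_vector_mult_def by (intro continuous_intros)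

lemma continuous_on_det [continuous_intros]:
  fixes A :: "'a::topological_space \<Rightarrow> real^'n::finite^'n"
  shows "continuous_on S A \<Longrightarrow> continuous_on S (\<lambda>x. det (A x))"
  unfolding det_def by (intro continuous_intros)

lemma continuous_on_outer [continuous_intros]:
  fixes a b :: "'a::topological_space \<Rightarrow> real^'n::finite"
  shows "continuous_on S a \<Longrightarrow> continuous_on S b \<Longrightarrow> continuous_on S (\<lambda>x. outer (a x) (b x))"
  unfolding outer_def by (intro continuous_intros)

lemma continuous_on_tproj [continuous_intros]:
  fixes a :: "'a::topological_space \<Rightarrow> real^'n::finite"
  shows "continuous_on S a \<Longrightarrow> continuous_on S (\<lambda>x. tproj (a x))"
  unfolding tproj_def by (intro continuous_intros)

lemma cinf_on_continuous_on_egrad: "cinf_on U G \<Longrightarrow> continuous_on U (egrad G)"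
  unfolding egrad_def using cinf_on_imp_C1_on C1_on_def by (intro continuous_intros) blast

lemma cinf_on_continuous_on_ehess: "cinf_on U G \<Longrightarrow> continuous_on U (ehess G)"
  unfolding ehess_def using C1_on_partial_deriv C1_on_def by (intro continuous_intros) blast

lemma cinf_on_continuous_on_cov_det: "cinf_on U G \<Longrightarrow> continuous_on U (cov_det \<theta> k G)"
  unfolding cov_det_def[abs_def] cov_W_def cov_hess_def cap_normal_def Let_def
  by (intro continuous_intros cinf_on_continuous_on cinf_on_continuous_on_egrad
      cinf_on_continuous_on_ehess)

lemma cinf_on_continuous_on_cov_grad: "cinf_on U G \<Longrightarrow> continuous_on U (cov_grad \<theta> k G)"
  unfolding cov_grad_def[abs_def] cap_normal_def
  by (intro continuous_intros cinf_on_continuous_on_egrad)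

section \<open>Two solutions at a touching point\<close>

lemma touching_tangential_conditions:
  fixes k :: "'m::finite" and h1 h2 :: "real^'m \<Rightarrow> real"
  assumes h1: "cinf_on U1 h1" "cap \<theta> k \<subseteq> U1" and h2: "cinf_on U2 h2" "cap \<theta> k \<subseteq> U2"
    and \<zeta>0: "\<zeta>0 \<in> cap \<theta> k" and le: "\<And>\<zeta>. \<zeta> \<in> cap \<theta> k \<Longrightarrow> h1 \<zeta> \<le> c * h2 \<zeta>"
    and eq: "h1 \<zeta>0 = c * h2 \<zeta>0"
    and v: "v \<bullet> cap_normal \<theta> k \<zeta>0 = 0" "v \<noteq> 0" and inward: "\<zeta>0 $ k > 0 \<or> v $ k > 0"
  defines "\<nu> \<equiv> cap_normal \<theta> k \<zeta>0"
    and "g \<equiv> egrad h1 \<zeta>0 - c *\<^sub>R egrad h2 \<zeta>0" and "H \<equiv> ehess h1 \<zeta>0 - c *\<^sub>R ehess h2 \<zeta>0"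
  shows "g \<bullet> v \<le> 0" and "g \<bullet> v = 0 \<Longrightarrow> v \<bullet> (H *v v) - (g \<bullet> \<nu>) * (v \<bullet> v) \<le> 0"
proof -
  define w where "w = (1 / norm v) *\<^sub>R v"
  have nv: "norm v > 0" using v by simp
  have w: "norm w = 1" "w \<bullet> \<nu> = 0" "\<zeta>0 $ k > 0 \<or> w $ k > 0"
    using v nv inward by (auto simp: w_def \<nu>_def)
  obtain d where d: "d > 0" "\<And>t. 0 < t \<Longrightarrow> t < d \<Longrightarrow> great_circle (cap_center \<theta> k) \<nu> w t \<in> cap_interior \<theta> k"
    using great_circle_enters_cap_interior[OF \<zeta>0 w(1)] w unfolding \<nu>_def by blast
  have on_cap: "h1 (great_circle (cap_center \<theta> k) \<nu> w t) \<le> c * h2 (great_circle (cap_center \<theta> k) \<nu> w t)"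
    if "0 < t" "t < d" for t
    using d(2)[OF that] le by (simp add: cap_interior_def)
  have start: "cap_center \<theta> k + \<nu> = \<zeta>0" by (simp add: \<nu>_def)
  note max = great_circle_max_conditions[OF h1(1) h2(1) _ _ d(1) on_cap, unfolded start]
  have "g \<bullet> w \<le> 0" and crit: "g \<bullet> w = 0 \<Longrightarrow> w \<bullet> (H *v w) - g \<bullet> \<nu> \<le> 0"
    using max \<zeta>0 h1(2) h2(2) eq unfolding g_def H_def by auto
  moreover have "g \<bullet> v = norm v * (g \<bullet> w)" using nv by (simp add: w_def)
  moreover have "v \<bullet> (H *v v) - (g \<bullet> \<nu>) * (v \<bullet> v) = (norm v)\<^sup>2 * (w \<bullet> (H *v w) - g \<bullet> \<nu>)"
    using nv by (simp add: w_def matrix_vector_mult_scaleR power2_norm_eq_inner[symmetric] field_simps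
        power2_eq_square)
  ultimately show "g \<bullet> v \<le> 0" and "g \<bullet> v = 0 \<Longrightarrow> v \<bullet> (H *v v) - (g \<bullet> \<nu>) * (v \<bullet> v) \<le> 0"
    using nv by (auto simp: mult_nonneg_nonpos mult_le_0_iff)
qed

lemma tangential_conditions_all_directions:
  fixes g \<nu> :: "real^'n::finite" and H :: "real^'n^'n"
  assumes cond: "\<And>v. v \<bullet> \<nu> = 0 \<Longrightarrow> v \<noteq> 0 \<Longrightarrow> g \<bullet> v \<le> 0 \<and> (g \<bullet> v = 0 \<longrightarrow> v \<bullet> (H *v v) - s * (v \<bullet> v) \<le> 0)"
    and v: "v \<bullet> \<nu> = 0"
  shows "g \<bullet> v = 0 \<and> v \<bullet> (H *v v) - s * (v \<bullet> v) \<le> 0"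
proof (cases "v = 0")
  case False
  have "g \<bullet> v \<le> 0" "g \<bullet> (- v) \<le> 0" using cond[of v] cond[of "- v"] v False by auto
  then show ?thesis using cond[OF v False] by simp
qed simp

text \<open>On a boundary point only directions into the half-space \<open>e \<bullet> v > 0\<close> are admissible.
  A direction \<open>w\<close> of that kind with \<open>g \<bullet> w = 0\<close> (supplied by the Robin condition) lets one reach
  every tangent direction: \<open>w \<pm> v\<close> for the first-order condition and the limit of \<open>v + \<epsilon> w\<close>
  for the second-order one.\<close>

lemma tangential_conditions_half_space:
  fixes g \<nu> e w :: "real^'n::finite" and H :: "real^'n^'n"
  assumes w: "w \<bullet> \<nu> = 0" "e \<bullet> w > 0" "g \<bullet> w = 0"
    and cond: "\<And>v. v \<bullet> \<nu> = 0 \<Longrightarrow> e \<bullet> v > 0 \<Longrightarrow> g \<bullet> v \<le> 0 \<and> (g \<bullet> v = 0 \<longrightarrow> v \<bullet> (H *v v) - s * (v \<bullet> v) \<le> 0)"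
    and v: "v \<bullet> \<nu> = 0"
  shows "g \<bullet> v = 0 \<and> v \<bullet> (H *v v) - s * (v \<bullet> v) \<le> 0"
proof -
  define Q where "Q x = x \<bullet> (H *v x) - s * (x \<bullet> x)" for x
  have g_perp: "g \<bullet> x = 0" if x: "x \<bullet> \<nu> = 0" for x
  proof -
    define x' where "x' = x - ((e \<bullet> x) / (e \<bullet> w)) *\<^sub>R w"
    have x': "x' \<bullet> \<nu> = 0" "e \<bullet> x' = 0"
      using x w by (simp_all add: x'_def inner_diff_left inner_diff_right)
    have "g \<bullet> (w + x') \<le> 0" "g \<bullet> (w - x') \<le> 0"
      using cond[of "w + x'"] cond[of "w - x'"] x' w
      by (simp_all add: inner_add_left inner_add_right inner_diff_left inner_diff_right)
    then have "g \<bullet> x' = 0" using w by (simp add: inner_add_right inner_diff_right)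
    then show ?thesis using w by (simp add: x'_def inner_diff_right)
  qed
  have Q_half: "Q x \<le> 0" if "x \<bullet> \<nu> = 0" "e \<bullet> x > 0" for x
    using cond[OF that] g_perp[OF that(1)] by (simp add: Q_def)
  have "Q v \<le> 0"
  proof (cases "e \<bullet> v = 0")
    case False
    have "H *v (- v) = - (H *v v)" by (metis matrix_vector_mult_scaleR scaleR_minus1_left)
    then have "Q (- v) = Q v" by (simp add: Q_def)
    then show ?thesis using Q_half[of v] Q_half[of "- v"] v False by (cases "e \<bullet> v > 0") auto
  next
    case True
    define B where "B = v \<bullet> (H *v w) + w \<bullet> (H *v v) - 2 * s * (v \<bullet> w)"
    have expand: "Q (v + \<epsilon> *\<^sub>R w) = Q v + \<epsilon> * B + \<epsilon>\<^sup>2 * Q w" for \<epsilon>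
      by (simp add: Q_def B_def matrix_vector_right_distrib matrix_vector_mult_scaleR
          inner_add_left inner_add_right inner_commute power2_eq_square algebra_simps)
    have "\<forall>\<^sub>F \<epsilon> in at_right 0. Q v + \<epsilon> * B + \<epsilon>\<^sup>2 * Q w \<le> 0"
      unfolding eventually_at_right_field
      using Q_half[of "v + _ *\<^sub>R w"] v w True
      by (intro exI[of _ 1]) (auto simp: expand[symmetric] inner_add_left inner_add_right)
    moreover have "((\<lambda>\<epsilon>. Q v + \<epsilon> * B + \<epsilon>\<^sup>2 * Q w) \<longlongrightarrow> Q v) (at_right 0)"
      by (auto intro!: tendsto_eq_intros)
    ultimately show ?thesis using tendsto_upperbound by fastforce
  qed
  then show ?thesis using g_perp[OF v] by (simp add: Q_def)
qed

lemma robin_touching_direction: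
  fixes k :: "'m::finite"
  assumes \<zeta>0: "\<zeta>0 \<in> cap_bdry \<theta> k" and \<theta>: "0 < \<theta>" "\<theta> < pi"
    and robin1: "cov_grad \<theta> k h1 \<zeta>0 \<bullet> cap_conormal \<theta> k \<zeta>0 = cot \<theta> * h1 \<zeta>0"
    and robin2: "cov_grad \<theta> k h2 \<zeta>0 \<bullet> cap_conormal \<theta> k \<zeta>0 = cot \<theta> * h2 \<zeta>0"
    and eq: "h1 \<zeta>0 = c * h2 \<zeta>0"
  shows "(egrad h1 \<zeta>0 - c *\<^sub>R egrad h2 \<zeta>0) \<bullet> (tproj (cap_normal \<theta> k \<zeta>0) *v axis k 1) = 0"
proof -
  define w where "w = tproj (cap_normal \<theta> k \<zeta>0) *v axis k 1"
  note w = cap_boundary_inward_tangent[OF \<zeta>0 \<theta>, folded w_def]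
  have "w \<noteq> 0" using w(2) by auto
  have "egrad h \<zeta>0 \<bullet> w = - (norm w * (cot \<theta> * h \<zeta>0))"
    if "cov_grad \<theta> k h \<zeta>0 \<bullet> cap_conormal \<theta> k \<zeta>0 = cot \<theta> * h \<zeta>0" for h
  proof -
    have "cov_grad \<theta> k h \<zeta>0 \<bullet> w = egrad h \<zeta>0 \<bullet> w"
      unfolding cov_grad_def using inner_tproj tproj_fixes_orthogonal[OF w(1)] by (metis inner_commute)
    then show ?thesis using that \<open>w \<noteq> 0\<close> unfolding w(3) by (simp add: field_simps)
  qed
  from this[OF robin1] this[OF robin2] show ?thesis
    using eq by (simp add: w_def[symmetric] inner_diff_left algebra_simps)
qed

lemma touching_point_conditions:
  fixes k :: "'m::finite" and h1 h2 :: "real^'m \<Rightarrow> real"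
  assumes \<theta>: "0 < \<theta>" "\<theta> < pi"
    and h1: "cinf_on U1 h1" "cap \<theta> k \<subseteq> U1" and h2: "cinf_on U2 h2" "cap \<theta> k \<subseteq> U2"
    and \<zeta>0: "\<zeta>0 \<in> cap \<theta> k" and le: "\<And>\<zeta>. \<zeta> \<in> cap \<theta> k \<Longrightarrow> h1 \<zeta> \<le> c * h2 \<zeta>"
    and eq: "h1 \<zeta>0 = c * h2 \<zeta>0"
    and robin: "\<zeta>0 \<in> cap_bdry \<theta> k \<Longrightarrow>
       cov_grad \<theta> k h1 \<zeta>0 \<bullet> cap_conormal \<theta> k \<zeta>0 = cot \<theta> * h1 \<zeta>0 \<and>
       cov_grad \<theta> k h2 \<zeta>0 \<bullet> cap_conormal \<theta> k \<zeta>0 = cot \<theta> * h2 \<zeta>0"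
    and v: "v \<bullet> cap_normal \<theta> k \<zeta>0 = 0"
  defines "\<nu> \<equiv> cap_normal \<theta> k \<zeta>0"
    and "g \<equiv> egrad h1 \<zeta>0 - c *\<^sub>R egrad h2 \<zeta>0" and "H \<equiv> ehess h1 \<zeta>0 - c *\<^sub>R ehess h2 \<zeta>0"
  shows "g \<bullet> v = 0 \<and> v \<bullet> (H *v v) - (g \<bullet> \<nu>) * (v \<bullet> v) \<le> 0"
proof -
  note cond = touching_tangential_conditions[OF h1 h2 \<zeta>0 le eq, folded \<nu>_def g_def H_def]
  show ?thesis
  proof (cases "\<zeta>0 $ k > 0")
    case True
    show ?thesis
      by (rule tangential_conditions_all_directions[OF _ v[folded \<nu>_def]]) (use cond True in auto)
  next
    case False
    then have bdry: "\<zeta>0 \<in> cap_bdry \<theta> k" using \<zeta>0 by (simp add: cap_def cap_bdry_def)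
    define w where "w = tproj \<nu> *v axis k 1"
    note w = cap_boundary_inward_tangent[OF bdry \<theta>, folded \<nu>_def, folded w_def]
    have "g \<bullet> w = 0"
      using robin_touching_direction[OF bdry \<theta> conjunct1[OF robin[OF bdry]] conjunct2[OF robin[OF bdry]] eq]
      by (simp add: g_def w_def \<nu>_def)
    moreover have "v \<noteq> 0" if "0 < v $ k" for v :: "real^'m" using that by auto
    ultimately show ?thesis
      using w cond v[folded \<nu>_def]
      by (intro tangential_conditions_half_space[where e = "axis k 1" and w = w]) (auto simp: inner_axis')
  qed
qed

lemma touching_cov_grad:
  assumes \<zeta>0: "\<zeta>0 \<in> cap \<theta> k"
    and perp: "\<And>v. v \<bullet> cap_normal \<theta> k \<zeta>0 = 0 \<Longrightarrow> (egrad h1 \<zeta>0 - c *\<^sub>R egrad h2 \<zeta>0) \<bullet> v = 0"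
  shows "cov_grad \<theta> k h1 \<zeta>0 = c *\<^sub>R cov_grad \<theta> k h2 \<zeta>0"
proof -
  let ?P = "tproj (cap_normal \<theta> k \<zeta>0)" and ?g = "egrad h1 \<zeta>0 - c *\<^sub>R egrad h2 \<zeta>0"
  have n1: "norm (cap_normal \<theta> k \<zeta>0) = 1" by (rule norm_cap_normal[OF \<zeta>0])
  have "(?P *v ?g) \<bullet> (?P *v ?g) = ?g \<bullet> (?P *v ?g)"
    by (metis inner_tproj tproj_idem_vector[OF n1])
  also have "\<dots> = 0" by (rule perp[OF tproj_orthogonal[OF n1]])
  finally have "?P *v ?g = 0" by simp
  then show ?thesis
    by (simp add: cov_grad_def matrix_vector_mult_diff_distrib matrix_vector_mult_scaleR)
qed

lemma touching_cov_det_le: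
  fixes k :: "'m::finite" and h1 h2 :: "real^'m \<Rightarrow> real" and \<zeta>0 :: "real^'m" and \<theta> c :: real
  defines "\<nu> \<equiv> cap_normal \<theta> k \<zeta>0"
    and "g \<equiv> egrad h1 \<zeta>0 - c *\<^sub>R egrad h2 \<zeta>0" and "H \<equiv> ehess h1 \<zeta>0 - c *\<^sub>R ehess h2 \<zeta>0"
  assumes \<zeta>0: "\<zeta>0 \<in> cap \<theta> k"
    and sym: "transpose (ehess h1 \<zeta>0) = ehess h1 \<zeta>0" "transpose (ehess h2 \<zeta>0) = ehess h2 \<zeta>0"
    and convex: "strictly_convex_cap \<theta> k h1" and eq: "h1 \<zeta>0 = c * h2 \<zeta>0"
    and Q: "\<And>v. v \<bullet> \<nu> = 0 \<Longrightarrow> v \<bullet> (H *v v) - (g \<bullet> \<nu>) * (v \<bullet> v) \<le> 0"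
  shows "cov_det \<theta> k h1 \<zeta>0 \<le> c ^ (CARD('m) - 1) * cov_det \<theta> k h2 \<zeta>0"
proof -
  have "x \<bullet> (cov_W \<theta> k h1 \<zeta>0 *v x) \<le> c * (x \<bullet> (cov_W \<theta> k h2 \<zeta>0 *v x))" for x
  proof -
    define y where "y = tproj \<nu> *v x"
    have "y \<bullet> \<nu> = 0" unfolding y_def \<nu>_def by (rule tproj_orthogonal[OF norm_cap_normal[OF \<zeta>0]])
    then have "y \<bullet> (H *v y) - (g \<bullet> \<nu>) * (y \<bullet> y) \<le> 0" by (rule Q)
    then show ?thesis
      unfolding inner_cov_W[OF \<zeta>0] y_def[unfolded \<nu>_def, symmetric] eq
      by (simp add: H_def g_def \<nu>_def algebra_simps matrix_vector_mult_diff_rdistrib inner_diff_left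
          inner_diff_right scaleR_matrix_vector_assoc[symmetric])
  qed
  moreover have "v \<bullet> (cov_W \<theta> k h1 \<zeta>0 *v v) > 0" if "v \<bullet> \<nu> = 0" "v \<noteq> 0" for v
    using convex \<zeta>0 that unfolding strictly_convex_cap_def \<nu>_def by blast
  ultimately show ?thesis
    unfolding cov_det_def
    by (intro det_tangential_comparison norm_cap_normal[OF \<zeta>0] transpose_cov_W sym
        cov_W_mult_tproj[OF \<zeta>0]) (auto simp: \<nu>_def)
qed

section \<open>Uniqueness\<close>

definition cap_rhs ::
    "real \<Rightarrow> 'm::finite \<Rightarrow> real \<Rightarrow> real \<Rightarrow> (real^'m \<Rightarrow> real) \<Rightarrow> (real^'m \<Rightarrow> real) \<Rightarrow> real^'m \<Rightarrow> real" where
  "cap_rhs \<theta> k p q f h \<zeta> =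
     f \<zeta> * h \<zeta> powr (p - 1) * ((h \<zeta>)\<^sup>2 + (norm (cov_grad \<theta> k h \<zeta>))\<^sup>2) powr ((real CARD('m) - q) / 2)"

lemma cap_rhs_homogeneous:
  fixes k :: "'m::finite"
  assumes c: "c > 0" and h': "h' \<zeta> > 0"
    and eq: "h \<zeta> = c * h' \<zeta>" and grad: "cov_grad \<theta> k h \<zeta> = c *\<^sub>R cov_grad \<theta> k h' \<zeta>"
  shows "cap_rhs \<theta> k p q f h \<zeta> = c powr (p - 1 + real CARD('m) - q) * cap_rhs \<theta> k p q f h' \<zeta>"
proof -
  define X where "X = (h' \<zeta>)\<^sup>2 + (norm (cov_grad \<theta> k h' \<zeta>))\<^sup>2"
  define \<alpha> where "\<alpha> = (real CARD('m) - q) / 2"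
  have X: "X > 0" using h' by (simp add: X_def add_pos_nonneg)
  have "(h \<zeta>)\<^sup>2 + (norm (cov_grad \<theta> k h \<zeta>))\<^sup>2 = c\<^sup>2 * X"
    by (simp add: eq grad X_def power_mult_distrib algebra_simps)
  then have "cap_rhs \<theta> k p q f h \<zeta> = f \<zeta> * (c * h' \<zeta>) powr (p - 1) * (c\<^sup>2 * X) powr \<alpha>"
    by (simp add: cap_rhs_def eq \<alpha>_def)
  also have "(c * h' \<zeta>) powr (p - 1) = c powr (p - 1) * h' \<zeta> powr (p - 1)"
    using c h' by (simp add: powr_mult)
  also have "(c\<^sup>2 * X) powr \<alpha> = c powr (2 * \<alpha>) * X powr \<alpha>"
  proof -
    have "c\<^sup>2 = c powr 2" using c by (simp add: powr_numeral)
    then have "c\<^sup>2 powr \<alpha> = c powr (2 * \<alpha>)" by (simp only: powr_powr)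
    then show ?thesis using c X by (simp add: powr_mult)
  qed
  also have "f \<zeta> * (c powr (p - 1) * h' \<zeta> powr (p - 1)) * (c powr (2 * \<alpha>) * X powr \<alpha>)
      = c powr (p - 1 + 2 * \<alpha>) * (f \<zeta> * h' \<zeta> powr (p - 1) * X powr \<alpha>)"
    by (simp add: powr_add)
  also have "p - 1 + 2 * \<alpha> = p - 1 + real CARD('m) - q" by (simp add: \<alpha>_def)
  finally show ?thesis by (simp add: cap_rhs_def X_def \<alpha>_def)
qed

text \<open>The equation is only imposed in the interior, but the maximum of \<open>h1 / h2\<close> may lie on the
  boundary.\<close>

lemma cap_equation_on_cap:
  fixes k :: "'m::finite"
  assumes \<theta>: "0 < \<theta>" "\<theta> < pi" and f: "smooth_upto (cap \<theta> k) f"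
    and sol: "is_cap_solution \<theta> k p q f h" and \<zeta>: "\<zeta> \<in> cap \<theta> k"
  shows "cov_det \<theta> k h \<zeta> = cap_rhs \<theta> k p q f h \<zeta>"
proof -
  obtain U where U: "cap \<theta> k \<subseteq> U" "cinf_on U h"
    using sol by (auto simp: is_cap_solution_def smooth_upto_def)
  obtain Uf where Uf: "cap \<theta> k \<subseteq> Uf" "cinf_on Uf f"
    using f by (auto simp: smooth_upto_def)
  have pos: "\<forall>\<zeta>\<in>cap \<theta> k. h \<zeta> > 0" using sol by (simp add: is_cap_solution_def)
  let ?F = "\<lambda>\<zeta>. cov_det \<theta> k h \<zeta> - cap_rhs \<theta> k p q f h \<zeta>"
  have "closure (cap_interior \<theta> k) \<subseteq> cap \<theta> k"
    by (rule closure_minimal) (auto simp: cap_interior_def intro: compact_imp_closed[OF compact_cap])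
  then have closure: "closure (cap_interior \<theta> k) = cap \<theta> k"
    using cap_subset_closure_interior[OF \<theta>] by blast
  have "continuous_on (cap \<theta> k) ?F"
    unfolding cap_rhs_def
    using pos continuous_on_subset[OF cinf_on_continuous_on_cov_det[OF U(2)] U(1)]
      continuous_on_subset[OF cinf_on_continuous_on[OF U(2)] U(1)]
      continuous_on_subset[OF cinf_on_continuous_on_cov_grad[OF U(2)] U(1)]
      continuous_on_subset[OF cinf_on_continuous_on[OF Uf(2)] Uf(1)]
    by (intro continuous_intros) (auto simp: add_pos_nonneg)
  then have F: "continuous_on (closure (cap_interior \<theta> k)) ?F" and \<zeta>': "\<zeta> \<in> closure (cap_interior \<theta> k)"
    using \<zeta> by (simp_all add: closure)
  have interior: "?F \<zeta>' = 0" if "\<zeta>' \<in> cap_interior \<theta> k" for \<zeta>'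
    using sol that by (simp add: is_cap_solution_def cap_rhs_def)
  have "?F \<zeta> \<le> 0" by (rule continuous_le_on_closure[OF F \<zeta>']) (simp add: interior)
  moreover have "?F \<zeta> \<ge> 0" by (rule continuous_ge_on_closure[OF F \<zeta>']) (simp add: interior)
  ultimately show ?thesis by simp
qed

lemma touching_ratio_le_one:
  fixes k :: "'m::finite" and h1 h2 :: "real^'m \<Rightarrow> real"
  assumes \<theta>: "0 < \<theta>" "\<theta> < pi" and pq: "p > q"
    and f: "smooth_upto (cap \<theta> k) f" "\<forall>\<zeta>\<in>cap \<theta> k. f \<zeta> > 0"
    and sol1: "is_cap_solution \<theta> k p q f h1" and sol2: "is_cap_solution \<theta> k p q f h2"
    and \<zeta>0: "\<zeta>0 \<in> cap \<theta> k" and c: "c > 0"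
    and le: "\<And>\<zeta>. \<zeta> \<in> cap \<theta> k \<Longrightarrow> h1 \<zeta> \<le> c * h2 \<zeta>" and eq: "h1 \<zeta>0 = c * h2 \<zeta>0"
  shows "c \<le> 1"
proof (rule ccontr)
  assume "\<not> c \<le> 1"
  obtain U1 U2 where U1: "cinf_on U1 h1" "cap \<theta> k \<subseteq> U1" and U2: "cinf_on U2 h2" "cap \<theta> k \<subseteq> U2"
    using sol1 sol2 by (auto simp: is_cap_solution_def smooth_upto_def)
  have h2: "h2 \<zeta>0 > 0" using sol2 \<zeta>0 by (simp add: is_cap_solution_def)
  have "\<zeta>0 \<in> cap_bdry \<theta> k \<Longrightarrow>
     cov_grad \<theta> k h1 \<zeta>0 \<bullet> cap_conormal \<theta> k \<zeta>0 = cot \<theta> * h1 \<zeta>0 \<and>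
     cov_grad \<theta> k h2 \<zeta>0 \<bullet> cap_conormal \<theta> k \<zeta>0 = cot \<theta> * h2 \<zeta>0"
    using sol1 sol2 by (simp add: is_cap_solution_def)
  note tangential = touching_point_conditions[OF \<theta> U1 U2 \<zeta>0 le eq this]
  have grad: "cov_grad \<theta> k h1 \<zeta>0 = c *\<^sub>R cov_grad \<theta> k h2 \<zeta>0"
    using tangential by (intro touching_cov_grad[OF \<zeta>0]) blast
  have "cov_det \<theta> k h1 \<zeta>0 = c powr (p - 1 + real CARD('m) - q) * cov_det \<theta> k h2 \<zeta>0"
    using cap_equation_on_cap[OF \<theta> f(1) sol1 \<zeta>0] cap_equation_on_cap[OF \<theta> f(1) sol2 \<zeta>0]
      cap_rhs_homogeneous[where h = h1 and h' = h2, OF c h2 eq grad] by simp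
  moreover have "cov_det \<theta> k h1 \<zeta>0 \<le> c ^ (CARD('m) - 1) * cov_det \<theta> k h2 \<zeta>0"
  proof (rule touching_cov_det_le[OF \<zeta>0 ehess_symmetric[OF U1(1)] ehess_symmetric[OF U2(1)]])
    show "strictly_convex_cap \<theta> k h1" using sol1 by (simp add: is_cap_solution_def)
  qed (use \<zeta>0 U1(2) U2(2) eq tangential in blast)+
  moreover have det2: "cov_det \<theta> k h2 \<zeta>0 > 0"
    using cap_equation_on_cap[OF \<theta> f(1) sol2 \<zeta>0] f(2) h2 \<zeta>0 by (simp add: cap_rhs_def add_pos_nonneg)
  moreover have "c ^ (CARD('m) - 1) = c powr (real CARD('m) - 1)"
    using c by (simp add: powr_realpow[symmetric] of_nat_diff)
  ultimately have "c powr (p - 1 + real CARD('m) - q) * cov_det \<theta> k h2 \<zeta>0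
      \<le> c powr (real CARD('m) - 1) * cov_det \<theta> k h2 \<zeta>0"
    by simp
  then have "c powr (p - 1 + real CARD('m) - q) \<le> c powr (real CARD('m) - 1)" using det2 by simp
  then show False using \<open>\<not> c \<le> 1\<close> pq by simp
qed

lemma cap_solution_le:
  fixes k :: "'m::finite" and h1 h2 :: "real^'m \<Rightarrow> real"
  assumes \<theta>: "0 < \<theta>" "\<theta> < pi" and pq: "p > q"
    and f: "smooth_upto (cap \<theta> k) f" "\<forall>\<zeta>\<in>cap \<theta> k. f \<zeta> > 0"
    and sol1: "is_cap_solution \<theta> k p q f h1" and sol2: "is_cap_solution \<theta> k p q f h2"
  shows "\<forall>\<zeta>\<in>cap \<theta> k. h1 \<zeta> \<le> h2 \<zeta>"
proof (cases "cap \<theta> k = {}")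
  case False
  obtain U1 U2 where U1: "cinf_on U1 h1" "cap \<theta> k \<subseteq> U1" and U2: "cinf_on U2 h2" "cap \<theta> k \<subseteq> U2"
    using sol1 sol2 by (auto simp: is_cap_solution_def smooth_upto_def)
  have pos1: "\<And>\<zeta>. \<zeta> \<in> cap \<theta> k \<Longrightarrow> h1 \<zeta> > 0" and pos2: "\<And>\<zeta>. \<zeta> \<in> cap \<theta> k \<Longrightarrow> h2 \<zeta> > 0"
    using sol1 sol2 by (auto simp: is_cap_solution_def)
  have "continuous_on (cap \<theta> k) (\<lambda>\<zeta>. h1 \<zeta> / h2 \<zeta>)"
    using continuous_on_subset[OF cinf_on_continuous_on[OF U1(1)] U1(2)]
      continuous_on_subset[OF cinf_on_continuous_on[OF U2(1)] U2(2)] pos2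
    by (intro continuous_intros) (auto simp: less_imp_neq[symmetric])
  then obtain \<zeta>0 where \<zeta>0: "\<zeta>0 \<in> cap \<theta> k"
      and max: "\<And>\<zeta>. \<zeta> \<in> cap \<theta> k \<Longrightarrow> h1 \<zeta> / h2 \<zeta> \<le> h1 \<zeta>0 / h2 \<zeta>0"
    using continuous_attains_sup[OF compact_cap False] by blast
  define c where "c = h1 \<zeta>0 / h2 \<zeta>0"
  have le: "h1 \<zeta> \<le> c * h2 \<zeta>" if "\<zeta> \<in> cap \<theta> k" for \<zeta>
    using max[OF that] pos2[OF that] by (simp add: c_def[symmetric] divide_le_eq)
  have "c \<le> 1"
  proof (rule touching_ratio_le_one[OF \<theta> pq f sol1 sol2 \<zeta>0 _ le])
    show "c > 0" using pos1[OF \<zeta>0] pos2[OF \<zeta>0] by (simp add: c_def)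
    show "h1 \<zeta>0 = c * h2 \<zeta>0" using pos2[OF \<zeta>0] by (simp add: c_def)
  qed
  show ?thesis
  proof
    fix \<zeta> assume \<zeta>: "\<zeta> \<in> cap \<theta> k"
    have "c * h2 \<zeta> \<le> h2 \<zeta>" using \<open>c \<le> 1\<close> pos2[OF \<zeta>] by simp
    then show "h1 \<zeta> \<le> h2 \<zeta>" using le[OF \<zeta>] by linarith
  qed
qed simp

theorem lemma5p7:
  fixes k :: "'m::finite" and \<theta> p q :: real and f h1 h2 :: "real^'m \<Rightarrow> real"
  assumes "CARD('m) \<ge> 2"
    and "p > q"
    and "0 < \<theta>" and "\<theta> < pi / 2"
    and "smooth_upto (cap \<theta> k) f" and "\<forall>\<zeta>\<in>cap \<theta> k. f \<zeta> > 0"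
    and "is_cap_solution \<theta> k p q f h1"
    and "is_cap_solution \<theta> k p q f h2"
  shows "\<forall>\<zeta>\<in>cap \<theta> k. h1 \<zeta> = h2 \<zeta>"
proof -
  have "\<theta> < pi" using assms(3,4) by linarith
  note le = cap_solution_le[OF \<open>0 < \<theta>\<close> this \<open>p > q\<close> assms(5,6)]
  have "\<forall>\<zeta>\<in>cap \<theta> k. h1 \<zeta> \<le> h2 \<zeta>" "\<forall>\<zeta>\<in>cap \<theta> k. h2 \<zeta> \<le> h1 \<zeta>"
    using le[OF assms(7,8)] le[OF assms(8,7)] by blast+
  then show ?thesis by (meson antisym)
qed

end
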